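(* Let $\Gamma=(V,E)$ be a graph, $x,y\in V$ and $\tau\in\mathbb{Z}_{\ge1}$. For each eigenvalue $\lambda$ of $P=P(\Gamma)$ let $E_\lambda$ be the orthogonal projection onto the eigenspace of $P$ for $\lambda$. The following are equivalent. (A) Perfect state transfer occurs on $\Gamma$ from $d^*e_x$ to $d^*e_y$ at time $\tau$. (B) There exists $\gamma\in\{\pm1\}$ such that $T_\tau(P)e_x=\gamma e_y$. (C) There exists $\gamma\in\{\pm1\}$ such that: (a) for every $\lambda\in\sigma(P)$, $E_\lambda e_x=\pm E_\lambda e_y$; (b) for every $\lambda\in\Theta_P(e_x)$, if $E_\lambda e_x=\gamma E_\lambda e_y$ then $\lambda=\cos\frac{j}{\tau}\pi$ for some even integer $j$; (c) for every $\lambda\in\Theta_P(e_x)$, if $E_\lambda e_x=-\gamma E_\lambda e_y$ then $\lambda=\cos\frac{j}{\tau}\pi$ for some odd integer $j$. Moreover, if $\Gamma$ is regular, then $\gamma=1$ in both (B) and (C).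
   Context: All graphs are finite and simple. For $\Gamma=(V,E)$ with symmetric arc set $\mathcal{A}$ ($t((x,y))=y$, $(x,y)^{-1}=(y,x)$): boundary matrix $d_{x,a}=\frac{1}{\sqrt{\deg x}}\delta_{x,t(a)}$, shift matrix $R_{a,b}=\delta_{a,b^{-1}}$, time evolution matrix $U=R(2d^*d-I_{\mathcal{A}})$, discriminant $P=dRd^*$. $e_x$ is the standard unit vector. Perfect state transfer from a state $\Phi$ to a distinct state $\Psi$ at time $\tau$ means $U^\tau\Phi=\gamma\Psi$ for some $\gamma\in\mathbb{C}$, $|\gamma|=1$. $T_n$ is the Chebyshev polynomial of the first kind ($T_0=1$, $T_1=x$, $T_n=2xT_{n-1}-T_{n-2}$). $\sigma(P)$ is the set of distinct eigenvalues of $P$ and $\Theta_P(e_x)=\{\lambda\in\sigma(P)\mid E_\lambda e_x\ne0\}$ is the eigenvalue support. *)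

theory Defs
  imports Complex_Main
begin

text \<open>Finite simple graphs: vertex set = the finite type 'a, adjacency relation E
  symmetric and irreflexive. Arc-indexed objects are supported on the arc set.\<close>

definition simple_graph :: "('a::finite \<Rightarrow> 'a \<Rightarrow> bool) \<Rightarrow> bool" where
  "simple_graph E \<longleftrightarrow> (\<forall>u v. E u v \<longrightarrow> E v u) \<and> (\<forall>u. \<not> E u u)"

definition arcs :: "('a \<Rightarrow> 'a \<Rightarrow> bool) \<Rightarrow> ('a \<times> 'a) set" where
  "arcs E = {(u, v). E u v}"

definition deg :: "('a::finite \<Rightarrow> 'a \<Rightarrow> bool) \<Rightarrow> 'a \<Rightarrow> nat" where
  "deg E u = card {v. E u v}"

definition regular :: "('a::finite \<Rightarrow> 'a \<Rightarrow> bool) \<Rightarrow> bool" where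
  "regular E \<longleftrightarrow> (\<exists>k. \<forall>u. deg E u = k)"

definition arc_tgt :: "'a \<times> 'a \<Rightarrow> 'a" where
  "arc_tgt a = snd a"

definition arc_inv :: "'a \<times> 'a \<Rightarrow> 'a \<times> 'a" where
  "arc_inv a = (snd a, fst a)"

text \<open>Boundary matrix d (rows: vertices, columns: arcs).\<close>
definition bd :: "('a::finite \<Rightarrow> 'a \<Rightarrow> bool) \<Rightarrow> 'a \<Rightarrow> 'a \<times> 'a \<Rightarrow> real" where
  "bd E u a = (if a \<in> arcs E \<and> arc_tgt a = u then 1 / sqrt (real (deg E u)) else 0)"

definition shift :: "('a::finite \<Rightarrow> 'a \<Rightarrow> bool) \<Rightarrow> 'a \<times> 'a \<Rightarrow> 'a \<times> 'a \<Rightarrow> real" where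
  "shift E a b = (if a \<in> arcs E \<and> b \<in> arcs E \<and> a = arc_inv b then 1 else 0)"

text \<open>d^* applied to a vertex vector (d is real, so d^* is its transpose).\<close>
definition dstar :: "('a::finite \<Rightarrow> 'a \<Rightarrow> bool) \<Rightarrow> ('a \<Rightarrow> complex) \<Rightarrow> ('a \<times> 'a \<Rightarrow> complex)" where
  "dstar E v a = (\<Sum>u\<in>UNIV. complex_of_real (bd E u a) * v u)"

definition dmul :: "('a::finite \<Rightarrow> 'a \<Rightarrow> bool) \<Rightarrow> ('a \<times> 'a \<Rightarrow> complex) \<Rightarrow> ('a \<Rightarrow> complex)" where
  "dmul E w u = (\<Sum>a\<in>arcs E. complex_of_real (bd E u a) * w a)"

definition evol :: "('a::finite \<Rightarrow> 'a \<Rightarrow> bool) \<Rightarrow> ('a \<times> 'a \<Rightarrow> complex) \<Rightarrow> ('a \<times> 'a \<Rightarrow> complex)" where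
  "evol E w a = (\<Sum>b\<in>arcs E. complex_of_real (shift E a b) * (2 * dstar E (dmul E w) b - w b))"

definition PST :: "('a::finite \<Rightarrow> 'a \<Rightarrow> bool) \<Rightarrow> ('a \<times> 'a \<Rightarrow> complex) \<Rightarrow> ('a \<times> 'a \<Rightarrow> complex) \<Rightarrow> nat \<Rightarrow> bool" where
  "PST E \<Phi> \<Psi> \<tau> \<longleftrightarrow> \<Phi> \<noteq> \<Psi> \<and> (\<exists>\<gamma>::complex. cmod \<gamma> = 1 \<and> (evol E ^^ \<tau>) \<Phi> = (\<lambda>a. \<gamma> * \<Psi> a))"

definition discr :: "('a::finite \<Rightarrow> 'a \<Rightarrow> bool) \<Rightarrow> 'a \<Rightarrow> 'a \<Rightarrow> real" where
  "discr E u v = (\<Sum>a\<in>arcs E. \<Sum>b\<in>arcs E. bd E u a * shift E a b * bd E v b)"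

definition mat_mult :: "('a::finite \<Rightarrow> 'a \<Rightarrow> real) \<Rightarrow> ('a \<Rightarrow> 'a \<Rightarrow> real) \<Rightarrow> 'a \<Rightarrow> 'a \<Rightarrow> real" where
  "mat_mult A B u v = (\<Sum>w\<in>UNIV. A u w * B w v)"

definition mat_vec :: "('a::finite \<Rightarrow> 'a \<Rightarrow> real) \<Rightarrow> ('a \<Rightarrow> real) \<Rightarrow> 'a \<Rightarrow> real" where
  "mat_vec A v u = (\<Sum>w\<in>UNIV. A u w * v w)"

definition id_mat :: "'a \<Rightarrow> 'a \<Rightarrow> real" where
  "id_mat u v = (if u = v then 1 else 0)"

fun cheb_mat :: "nat \<Rightarrow> ('a::finite \<Rightarrow> 'a \<Rightarrow> real) \<Rightarrow> 'a \<Rightarrow> 'a \<Rightarrow> real" where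
  "cheb_mat 0 M = id_mat"
| "cheb_mat (Suc 0) M = M"
| "cheb_mat (Suc (Suc n)) M =
     (\<lambda>u v. 2 * mat_mult M (cheb_mat (Suc n) M) u v - cheb_mat n M u v)"

definition unitv :: "'a \<Rightarrow> 'a \<Rightarrow> 'b::zero_neq_one" where
  "unitv x = (\<lambda>u. if u = x then 1 else 0)"

definition eigenspace :: "('a::finite \<Rightarrow> 'a \<Rightarrow> real) \<Rightarrow> real \<Rightarrow> ('a \<Rightarrow> real) set" where
  "eigenspace M mu = {v. mat_vec M v = (\<lambda>u. mu * v u)}"

text \<open>Set of distinct eigenvalues (P is real symmetric, so all eigenvalues are real).\<close>
definition spectrum :: "('a::finite \<Rightarrow> 'a \<Rightarrow> real) \<Rightarrow> real set" where
  "spectrum M = {mu. \<exists>v. v \<noteq> (\<lambda>_. 0) \<and> v \<in> eigenspace M mu}"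

definition eigproj :: "('a::finite \<Rightarrow> 'a \<Rightarrow> real) \<Rightarrow> real \<Rightarrow> ('a \<Rightarrow> real) \<Rightarrow> ('a \<Rightarrow> real)" where
  "eigproj M mu z = (THE w. w \<in> eigenspace M mu \<and>
       (\<forall>v\<in>eigenspace M mu. (\<Sum>u\<in>UNIV. (z u - w u) * v u) = 0))"

definition eig_support :: "('a::finite \<Rightarrow> 'a \<Rightarrow> real) \<Rightarrow> ('a \<Rightarrow> real) \<Rightarrow> real set" where
  "eig_support M z = {mu\<in>spectrum M. eigproj M mu z \<noteq> (\<lambda>_. 0)}"

definition condB :: "('a::finite \<Rightarrow> 'a \<Rightarrow> bool) \<Rightarrow> 'a \<Rightarrow> 'a \<Rightarrow> nat \<Rightarrow> real \<Rightarrow> bool" where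
  "condB E x y \<tau> \<gamma> \<longleftrightarrow>
     mat_vec (cheb_mat \<tau> (discr E)) (unitv x) = (\<lambda>u. \<gamma> * unitv y u)"

definition condC :: "('a::finite \<Rightarrow> 'a \<Rightarrow> bool) \<Rightarrow> 'a \<Rightarrow> 'a \<Rightarrow> nat \<Rightarrow> real \<Rightarrow> bool" where
  "condC E x y \<tau> \<gamma> \<longleftrightarrow>
     (let P = discr E; Ex = (\<lambda>mu. eigproj P mu (unitv x)); Ey = (\<lambda>mu. eigproj P mu (unitv y)) in
      (\<forall>mu\<in>spectrum P. Ex mu = Ey mu \<or> Ex mu = (\<lambda>u. - Ey mu u)) \<and>
      (\<forall>mu\<in>eig_support P (unitv x). Ex mu = (\<lambda>u. \<gamma> * Ey mu u) \<longrightarrow>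
          (\<exists>j::int. even j \<and> mu = cos (real_of_int j / real \<tau> * pi))) \<and>
      (\<forall>mu\<in>eig_support P (unitv x). Ex mu = (\<lambda>u. - \<gamma> * Ey mu u) \<longrightarrow>
          (\<exists>j::int. odd j \<and> mu = cos (real_of_int j / real \<tau> * pi))))"

end

theory Submission
  imports Defs "HOL-Analysis.Analysis"
begin

(* On real arc vectors the walk U = R (2 d^* d - I) and the discriminant P = d R d^* satisfy
   d R U w = d w and d U w = 2 P (d w) - d R w, so a_n = d U^n d^* e_x obeys the Chebyshev
   recurrence and a_n = T_n(P) e_x.  As U is an isometry and d^* d is the orthogonal projection
   onto the range of d^*, U^tau d^* e_x = gamma d^* e_y holds exactly when T_tau(P) e_x = gamma e_y;
   since both states are real, gamma = 1 or gamma = -1.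
   Spectrally, T_tau(P) e_x = gamma e_y means E_lambda e_y = gamma T_tau(lambda) E_lambda e_x for every
   eigenvalue lambda.  The spectrum of P lies in [-1, 1], where |T_tau| <= 1, so by Parseval
   T_tau(lambda) = 1 or -1 on the eigenvalue support of e_x, i.e. lambda = cos (j pi / tau) with the
   parity of j determined by the relative sign of E_lambda e_x and E_lambda e_y.
   For a regular graph the columns of P, hence those of T_tau(P), sum to 1, which forces gamma = 1. *)

section \<open>Vectors and symmetric matrices over a finite index type\<close>

definition vdot :: "('a::finite \<Rightarrow> real) \<Rightarrow> ('a \<Rightarrow> real) \<Rightarrow> real" where
  "vdot f g = (\<Sum>u\<in>UNIV. f u * g u)"

lemma vdot_commute: "vdot f g = vdot g f"
  by (simp add: vdot_def mult.commute)

lemma vdot_lincomb_left: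
  "vdot (\<lambda>u. a * f u + b * g u) h = a * vdot f h + b * vdot g h"
  by (simp add: vdot_def sum.distrib sum_distrib_left algebra_simps)

lemma vdot_scale_left: "vdot (\<lambda>u. c * f u) g = c * vdot f g"
  by (simp add: vdot_def sum_distrib_left mult.assoc)

lemma vdot_scale_right: "vdot f (\<lambda>u. c * g u) = c * vdot f g"
  by (simp add: vdot_def sum_distrib_left mult.left_commute)

lemma vdot_diff_left: "vdot (\<lambda>u. f u - g u) h = vdot f h - vdot g h"
  by (simp add: vdot_def sum_subtractf left_diff_distrib)

lemma vdot_self_nonneg: "0 \<le> vdot f f"
  by (simp add: vdot_def sum_nonneg)

lemma vdot_self_eq_0_iff: "vdot f f = 0 \<longleftrightarrow> f = (\<lambda>_. 0)"
  by (simp add: vdot_def sum_nonneg_eq_0_iff fun_eq_iff)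

lemma unitv_self: "unitv x x = 1"
  by (simp add: unitv_def)

lemma sum_unitv_mult: "(\<Sum>u\<in>UNIV. unitv x u * f u) = (f (x::'a::finite) :: real)"
proof -
  have "(\<Sum>u\<in>UNIV. unitv x u * f u) = (\<Sum>u\<in>UNIV. if u = x then f x else 0)"
    by (rule sum.cong) (auto simp: unitv_def)
  then show ?thesis by simp
qed

lemma vdot_unitv_left: "vdot (unitv x) f = f x"
  by (simp add: vdot_def sum_unitv_mult)

lemma vec_nth_vec_lambda: "vec_nth (vec_lambda f) = f"
  by (simp add: fun_eq_iff)

lemma vdot_vec_lambda: "vdot f g = inner (vec_lambda f) (vec_lambda g)"
  by (simp add: vdot_def inner_vec_def)

lemma mat_vec_lincomb:
  "mat_vec M (\<lambda>u. a * f u + b * g u) = (\<lambda>u. a * mat_vec M f u + b * mat_vec M g u)"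
  by (simp add: mat_vec_def fun_eq_iff sum.distrib sum_distrib_left algebra_simps)

lemma mat_vec_scale: "mat_vec M (\<lambda>u. c * f u) = (\<lambda>u. c * mat_vec M f u)"
  by (simp add: mat_vec_def fun_eq_iff sum_distrib_left mult.left_commute)

lemma mat_vec_mat_mult: "mat_vec (mat_mult A B) f = mat_vec A (mat_vec B f)"
proof
  fix u
  have "mat_vec (mat_mult A B) f u = (\<Sum>w\<in>UNIV. \<Sum>v\<in>UNIV. A u v * (B v w * f w))"
    by (simp add: mat_vec_def mat_mult_def sum_distrib_right mult.assoc)
  also have "\<dots> = (\<Sum>v\<in>UNIV. \<Sum>w\<in>UNIV. A u v * (B v w * f w))"
    by (rule sum.swap)
  finally show "mat_vec (mat_mult A B) f u = mat_vec A (mat_vec B f) u"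
    by (simp add: mat_vec_def sum_distrib_left)
qed

lemma mat_vec_unitv: "mat_vec M (unitv x) u = M u x"
  using sum_unitv_mult[of x "M u"] by (simp add: mat_vec_def mult.commute)

lemma mat_vec_id_mat: "mat_vec id_mat f = f"
proof -
  have "mat_vec id_mat f u = (\<Sum>w\<in>UNIV. if w = u then f u else 0)" for u
    unfolding mat_vec_def by (rule sum.cong) (auto simp: id_mat_def)
  then show ?thesis by (simp add: fun_eq_iff)
qed

definition symm :: "('a::finite \<Rightarrow> 'a \<Rightarrow> real) \<Rightarrow> bool" where
  "symm M \<longleftrightarrow> (\<forall>u v. M u v = M v u)"

lemma vdot_mat_vec_symm:
  assumes "symm M"
  shows "vdot (mat_vec M f) g = vdot f (mat_vec M g)"
proof -
  have "vdot (mat_vec M f) g = (\<Sum>u\<in>UNIV. \<Sum>w\<in>UNIV. M u w * f w * g u)"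
    by (simp add: vdot_def mat_vec_def sum_distrib_right)
  also have "\<dots> = (\<Sum>w\<in>UNIV. \<Sum>u\<in>UNIV. M u w * f w * g u)"
    by (rule sum.swap)
  also have "\<dots> = (\<Sum>w\<in>UNIV. f w * (\<Sum>u\<in>UNIV. M w u * g u))"
    unfolding sum_distrib_left
  proof (intro sum.cong refl)
    fix u w
    show "M u w * f w * g u = f w * (M w u * g u)"
      using assms by (simp add: symm_def[of M] mult_ac)
  qed
  finally show ?thesis
    by (simp add: vdot_def mat_vec_def)
qed

lemma eigenspace_iff: "v \<in> eigenspace M \<mu> \<longleftrightarrow> (\<forall>u. mat_vec M v u = \<mu> * v u)"
  by (simp add: eigenspace_def fun_eq_iff)

lemma eigenspace_lincomb:
  "f \<in> eigenspace M \<mu> \<Longrightarrow> g \<in> eigenspace M \<mu> \<Longrightarrow> (\<lambda>u. a * f u + b * g u) \<in> eigenspace M \<mu>"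
  by (simp add: eigenspace_iff mat_vec_lincomb algebra_simps)

lemma vdot_eigenspaces_eq_0:
  assumes "symm M" "f \<in> eigenspace M \<mu>" "g \<in> eigenspace M \<nu>" "\<mu> \<noteq> \<nu>"
  shows "vdot f g = 0"
proof -
  have "\<mu> * vdot f g = vdot (mat_vec M f) g"
    using assms(2) by (simp add: eigenspace_iff vdot_def sum_distrib_left mult.assoc)
  also have "\<dots> = vdot f (mat_vec M g)"
    by (rule vdot_mat_vec_symm[OF assms(1)])
  also have "\<dots> = \<nu> * vdot f g"
    using assms(3) by (simp add: eigenspace_iff vdot_def sum_distrib_left mult.left_commute)
  finally show ?thesis
    using assms(4) by (metis mult_cancel_right)
qed

section \<open>Spectral decomposition of symmetric matrices\<close>

lemma eigenspace_orthogonal_projection_exists: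
  fixes M :: "'a::finite \<Rightarrow> 'a \<Rightarrow> real"
  shows "\<exists>w\<in>eigenspace M \<mu>. \<forall>v\<in>eigenspace M \<mu>. vdot (\<lambda>u. z u - w u) v = 0"
proof -
  let ?S = "vec_lambda ` eigenspace M \<mu> :: (real^'a) set"
  have lincomb: "a *\<^sub>R vec_lambda f + b *\<^sub>R vec_lambda g \<in> ?S"
    if "f \<in> eigenspace M \<mu>" "g \<in> eigenspace M \<mu>" for a b f g
  proof
    show "a *\<^sub>R vec_lambda f + b *\<^sub>R vec_lambda g = vec_lambda (\<lambda>u. a * f u + b * g u)"
      by (simp add: vec_eq_iff)
  qed (rule eigenspace_lincomb[OF that])
  have "subspace ?S"
    unfolding subspace_def
  proof (intro conjI ballI allI)
    have "(\<lambda>_. 0) \<in> eigenspace M \<mu>" by (simp add: eigenspace_iff mat_vec_def)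
    from lincomb[OF this this, of 0 0] show "0 \<in> ?S" by simp
  next
    fix x y assume "x \<in> ?S" "y \<in> ?S"
    then show "x + y \<in> ?S" using lincomb[of _ _ 1 1] by auto
  next
    fix c :: real and x assume "x \<in> ?S"
    then show "c *\<^sub>R x \<in> ?S" using lincomb[of _ _ c 0] by auto
  qed
  then have "span ?S = ?S" by (rule span_eq_iff[THEN iffD2])
  then obtain p r where p: "p \<in> ?S" and r: "\<And>v. v \<in> ?S \<Longrightarrow> orthogonal r v"
    and decomp: "vec_lambda z = p + r"
    using orthogonal_subspace_decomp_exists[of ?S "vec_lambda z"] by metis
  obtain w where w: "w \<in> eigenspace M \<mu>" "p = vec_lambda w" using p by blast
  have "r = vec_lambda (\<lambda>u. z u - w u)" using decomp w by (simp add: vec_eq_iff algebra_simps)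
  then have "vdot (\<lambda>u. z u - w u) v = 0" if "v \<in> eigenspace M \<mu>" for v
    using r[of "vec_lambda v"] that by (simp add: vdot_vec_lambda orthogonal_def)
  with w show ?thesis by blast
qed

lemma eigenspace_orthogonal_projection_unique:
  assumes "w1 \<in> eigenspace M \<mu>" "\<forall>v\<in>eigenspace M \<mu>. vdot (\<lambda>u. z u - w1 u) v = 0"
    and "w2 \<in> eigenspace M \<mu>" "\<forall>v\<in>eigenspace M \<mu>. vdot (\<lambda>u. z u - w2 u) v = 0"
  shows "w1 = w2"
proof -
  let ?d = "\<lambda>u. w1 u - w2 u"
  have "?d = (\<lambda>u. 1 * w1 u + (-1) * w2 u)" by simp
  then have d: "?d \<in> eigenspace M \<mu>" using eigenspace_lincomb[OF assms(1,3)] by metis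
  have "vdot ?d ?d = vdot (\<lambda>u. z u - w2 u) ?d - vdot (\<lambda>u. z u - w1 u) ?d"
    by (simp add: vdot_diff_left)
  also have "\<dots> = 0" using assms(2,4) d by simp
  finally have "?d = (\<lambda>_. 0)" by (simp only: vdot_self_eq_0_iff)
  then show ?thesis by (simp add: fun_eq_iff)
qed

lemma eigproj_spec:
  fixes M :: "'a::finite \<Rightarrow> 'a \<Rightarrow> real"
  shows "eigproj M \<mu> z \<in> eigenspace M \<mu> \<and>
    (\<forall>v\<in>eigenspace M \<mu>. vdot (\<lambda>u. z u - eigproj M \<mu> z u) v = 0)"
proof -
  have "\<exists>!w. w \<in> eigenspace M \<mu> \<and> (\<forall>v\<in>eigenspace M \<mu>. vdot (\<lambda>u. z u - w u) v = 0)"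
    using eigenspace_orthogonal_projection_exists[of M \<mu> z]
      eigenspace_orthogonal_projection_unique[of _ M \<mu> z] by blast
  then show ?thesis unfolding eigproj_def vdot_def[symmetric] by (rule theI')
qed

lemma eigproj_in_eigenspace: "eigproj M \<mu> z \<in> eigenspace M \<mu>"
  using eigproj_spec by blast

lemma vdot_eigproj:
  assumes "v \<in> eigenspace M \<mu>"
  shows "vdot (eigproj M \<mu> z) v = vdot z v"
  using eigproj_spec[of M \<mu> z] assms by (simp add: vdot_diff_left)

lemma eigproj_eqI:
  assumes "w \<in> eigenspace M \<mu>" "\<And>v. v \<in> eigenspace M \<mu> \<Longrightarrow> vdot w v = vdot z v"
  shows "eigproj M \<mu> z = w"
proof -
  have "\<forall>v\<in>eigenspace M \<mu>. vdot (\<lambda>u. z u - w u) v = 0"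
    using assms(2) by (simp add: vdot_diff_left)
  then show ?thesis
    using eigenspace_orthogonal_projection_unique[OF eigproj_spec[THEN conjunct1]
        eigproj_spec[THEN conjunct2] assms(1)] by blast
qed

lemma linear_le_quadratic_imp_zero:
  fixes a K :: real
  assumes "0 \<le> a" and le: "\<And>t. 2 * t * a \<le> t\<^sup>2 * K"
  shows "a = 0"
proof (rule ccontr)
  assume "a \<noteq> 0"
  with assms(1) have a: "0 < a" by simp
  define t where "t = a / (\<bar>K\<bar> + 1)"
  have t: "0 < t" using a by (simp add: t_def)
  have "t * (2 * a) \<le> t * (t * K)" using le[of t] by (simp add: power2_eq_square mult_ac)
  then have "2 * a \<le> t * K" using t by simp
  also have "\<dots> \<le> t * \<bar>K\<bar>" using t by (simp add: mult_left_mono)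
  also have "\<dots> < a" using a by (simp add: t_def field_simps)
  finally show False using a by simp
qed

lemma selfadjoint_eigenvector_if_rayleigh_max:
  fixes L :: "'v::real_inner \<Rightarrow> 'v"
  assumes lin: "linear L" and selfadj: "\<And>x y. inner (L x) y = inner x (L y)"
    and W: "subspace W" "\<And>x. x \<in> W \<Longrightarrow> L x \<in> W" and v: "v \<in> W"
    and max: "\<And>y. y \<in> W \<Longrightarrow> inner (L y) y \<le> m * inner y y" and eq: "inner (L v) v = m * inner v v"
  shows "L v = m *\<^sub>R v"
proof -
  define u where "u = L v - m *\<^sub>R v"
  have uW: "u \<in> W" using W v by (simp add: u_def subspace_diff subspace_scale)
  have Luv: "inner (L u) v = inner (L v) u" using selfadj[of u v] by (simp add: inner_commute)
  have "inner u u = inner (L v - m *\<^sub>R v) u" by (simp add: u_def)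
  then have uu: "inner u u = inner (L v) u - m * inner v u" by (simp add: inner_diff_left)
  \<comment> \<open>Perturbing the maximiser \<open>v\<close> in the direction \<open>u\<close> changes the Rayleigh quotient to first
    order by a multiple of \<open>\<langle>u, u\<rangle>\<close>.\<close>
  have "2 * t * inner u u \<le> t\<^sup>2 * (m * inner u u - inner (L u) u)" for t
  proof -
    have "inner (L (v + t *\<^sub>R u)) (v + t *\<^sub>R u) \<le> m * inner (v + t *\<^sub>R u) (v + t *\<^sub>R u)"
      using max W(1) v uW by (simp add: subspace_add subspace_scale)
    moreover have "inner (L (v + t *\<^sub>R u)) (v + t *\<^sub>R u)
        = m * inner v v + 2 * t * inner (L v) u + t\<^sup>2 * inner (L u) u"
      using Luv eq by (simp add: linear_add[OF lin] linear_scale[OF lin] power2_eq_square algebra_simps)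
    moreover have "inner (v + t *\<^sub>R u) (v + t *\<^sub>R u) = inner v v + 2 * t * inner v u + t\<^sup>2 * inner u u"
      by (simp add: inner_commute power2_eq_square algebra_simps)
    ultimately have "m * inner v v + 2 * t * inner (L v) u + t\<^sup>2 * inner (L u) u
        \<le> m * (inner v v + 2 * t * inner v u + t\<^sup>2 * inner u u)"
      by (simp only:)
    then have "2 * t * (inner (L v) u - m * inner v u) \<le> t\<^sup>2 * (m * inner u u - inner (L u) u)"
      by (simp add: algebra_simps)
    then show ?thesis by (simp only: uu)
  qed
  then have "inner u u = 0" by (intro linear_le_quadratic_imp_zero) simp_all
  then show ?thesis by (simp add: u_def)
qed

lemma selfadjoint_eigenvector_exists:
  fixes L :: "'v::euclidean_space \<Rightarrow> 'v"
  assumes lin: "linear L" and selfadj: "\<And>x y. inner (L x) y = inner x (L y)"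
    and W: "subspace W" "\<And>x. x \<in> W \<Longrightarrow> L x \<in> W" and "w \<in> W" "w \<noteq> 0"
  shows "\<exists>v c. v \<in> W \<and> v \<noteq> 0 \<and> L v = c *\<^sub>R v"
proof -
  let ?S = "W \<inter> sphere 0 1"
  have "compact ?S"
    using closed_subspace[OF W(1)] compact_sphere by (rule closed_Int_compact)
  moreover have "w /\<^sub>R norm w \<in> ?S" using W(1) assms(5,6) by (simp add: subspace_scale)
  moreover have "continuous_on ?S (\<lambda>v. inner (L v) v)"
    using lin by (intro continuous_on_inner linear_continuous_on continuous_on_id)
      (simp add: linear_conv_bounded_linear)
  ultimately obtain v where v: "v \<in> ?S" and max: "\<And>y. y \<in> ?S \<Longrightarrow> inner (L y) y \<le> inner (L v) v"
    using continuous_attains_sup[of ?S "\<lambda>v. inner (L v) v"] by blast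
  define m where "m = inner (L v) v"
  have vW: "v \<in> W" and vv: "inner v v = 1" using v by (auto simp: power2_norm_eq_inner[symmetric])
  have "inner (L y) y \<le> m * inner y y" if "y \<in> W" for y
  proof (cases "y = 0")
    case True then show ?thesis using linear_0[OF lin] by simp
  next
    case False
    have "y /\<^sub>R norm y \<in> ?S" using that False W(1) by (simp add: subspace_scale)
    then have "inner (L (y /\<^sub>R norm y)) (y /\<^sub>R norm y) \<le> m" using max m_def by blast
    then have "inner (L y) y / (norm y)\<^sup>2 \<le> m"
      using False by (simp add: linear_scale[OF lin] power2_eq_square field_simps)
    then show ?thesis using False by (simp add: power2_norm_eq_inner field_simps)
  qed
  then have "L v = m *\<^sub>R v"
    using selfadjoint_eigenvector_if_rayleigh_max[OF lin selfadj W vW] vv by (simp add: m_def)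
  moreover have "v \<noteq> 0" using vv by auto
  ultimately show ?thesis using vW by blast
qed

lemma linear_mat_vec_vec:
  "linear (\<lambda>x::real^'a::finite. vec_lambda (mat_vec M (vec_nth x)))"
proof -
  have nth: "vec_nth (a *\<^sub>R x + b *\<^sub>R y) = (\<lambda>u. a * x $ u + b * y $ u)" for a b and x y :: "real^'a"
    by (simp add: fun_eq_iff)
  show ?thesis
  proof (rule linearI)
    fix x y :: "real^'a" and c :: real
    show "vec_lambda (mat_vec M (vec_nth (x + y))) =
        vec_lambda (mat_vec M (vec_nth x)) + vec_lambda (mat_vec M (vec_nth y))"
      using nth[of 1 x 1 y] mat_vec_lincomb[of M 1 _ 1] by (simp add: vec_eq_iff)
    show "vec_lambda (mat_vec M (vec_nth (c *\<^sub>R x))) = c *\<^sub>R vec_lambda (mat_vec M (vec_nth x))"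
      using nth[of c x 0 x] mat_vec_lincomb[of M c _ 0] by (simp add: vec_eq_iff)
  qed
qed

lemma orthogonal_to_eigenspaces_imp_zero:
  fixes M :: "'a::finite \<Rightarrow> 'a \<Rightarrow> real"
  assumes sym: "symm M" and orth: "\<And>\<mu> v. v \<in> eigenspace M \<mu> \<Longrightarrow> vdot r v = 0"
  shows "r = (\<lambda>_. 0)"
proof (rule ccontr)
  assume "r \<noteq> (\<lambda>_. 0)"
  then have r0: "vec_lambda r \<noteq> (0::real^'a)" by (simp add: vec_eq_iff fun_eq_iff)
  define L where "L = (\<lambda>x::real^'a. vec_lambda (mat_vec M (vec_nth x)))"
  define W where "W = {x::real^'a. \<forall>\<mu> v. v \<in> eigenspace M \<mu> \<longrightarrow> inner x (vec_lambda v) = 0}"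
  have lin: "linear L" unfolding L_def by (rule linear_mat_vec_vec)
  have selfadj: "inner (L x) y = inner x (L y)" for x y
    using vdot_mat_vec_symm[OF sym, of "vec_nth x" "vec_nth y"] by (simp add: L_def vdot_vec_lambda)
  have "subspace W" unfolding subspace_def W_def by (simp add: inner_add_left)
  moreover have "L x \<in> W" if "x \<in> W" for x
  proof -
    have "inner (L x) (vec_lambda v) = 0" if v: "v \<in> eigenspace M \<mu>" for \<mu> v
    proof -
      have "L (vec_lambda v) = \<mu> *\<^sub>R vec_lambda v"
        using v by (simp add: L_def eigenspace_iff vec_eq_iff vec_nth_vec_lambda)
      then show ?thesis using selfadj[of x "vec_lambda v"] \<open>x \<in> W\<close> v by (simp add: W_def)
    qed
    then show ?thesis by (simp add: W_def)
  qed
  moreover have "vec_lambda r \<in> W" using orth by (simp add: W_def vdot_vec_lambda[symmetric])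
  ultimately obtain v c where v: "v \<in> W" "v \<noteq> 0" "L v = c *\<^sub>R v"
    using selfadjoint_eigenvector_exists[OF lin selfadj _ _ _ r0] by blast
  have "mat_vec M (vec_nth v) u = c * vec_nth v u" for u
    using arg_cong[OF v(3), of "\<lambda>y. y $ u"] by (simp add: L_def)
  then have "vec_nth v \<in> eigenspace M c" by (simp add: eigenspace_iff)
  then have "inner v (vec_lambda (vec_nth v)) = 0" using v(1) unfolding W_def by blast
  with v(2) show False by (simp add: vec_lambda_eta)
qed

lemma finite_spectrum:
  fixes M :: "'a::finite \<Rightarrow> 'a \<Rightarrow> real"
  assumes sym: "symm M"
  shows "finite (spectrum M)"
proof -
  define g where "g \<mu> = (vec_lambda (SOME v. v \<noteq> (\<lambda>_. 0) \<and> v \<in> eigenspace M \<mu>) :: real^'a)" for \<mu>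
  have ev: "vec_nth (g \<mu>) \<noteq> (\<lambda>_. 0) \<and> vec_nth (g \<mu>) \<in> eigenspace M \<mu>" if "\<mu> \<in> spectrum M" for \<mu>
  proof -
    have "\<exists>v. v \<noteq> (\<lambda>_. 0) \<and> v \<in> eigenspace M \<mu>" using that by (simp add: spectrum_def)
    then show ?thesis unfolding g_def vec_nth_vec_lambda by (rule someI_ex)
  qed
  have nz: "g \<mu> \<noteq> 0" if "\<mu> \<in> spectrum M" for \<mu>
    using ev[OF that] by (auto simp: vec_eq_iff fun_eq_iff)
  have orth: "inner (g \<mu>) (g \<nu>) = 0" if "\<mu> \<in> spectrum M" "\<nu> \<in> spectrum M" "\<mu> \<noteq> \<nu>" for \<mu> \<nu>
    using vdot_eigenspaces_eq_0[OF sym] ev[OF that(1)] ev[OF that(2)] that(3)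
    by (metis vdot_vec_lambda vec_lambda_eta)
  have "inj_on g (spectrum M)"
    using orth nz by (metis inj_onI inner_eq_zero_iff)
  moreover have "finite (g ` spectrum M)"
  proof (rule conjunct1[OF independent_bound], rule pairwise_orthogonal_independent)
    show "pairwise orthogonal (g ` spectrum M)"
      using orth by (auto simp: pairwise_def orthogonal_def)
    show "0 \<notin> g ` spectrum M" using nz by auto
  qed
  ultimately show ?thesis using finite_imageD by blast
qed

lemma vdot_sum_left: "vdot (\<lambda>u. \<Sum>i\<in>I. f i u) g = (\<Sum>i\<in>I. vdot (f i) g)"
  by (simp add: vdot_def sum_distrib_right sum.swap[of _ I])

lemma sum_eigproj:
  fixes M :: "'a::finite \<Rightarrow> 'a \<Rightarrow> real"
  assumes sym: "symm M"
  shows "(\<lambda>u. \<Sum>\<mu>\<in>spectrum M. eigproj M \<mu> z u) = z"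
proof -
  define r where "r = (\<lambda>u. z u - (\<Sum>\<mu>\<in>spectrum M. eigproj M \<mu> z u))"
  have "vdot r v = 0" if v: "v \<in> eigenspace M \<nu>" for \<nu> v
  proof (cases "\<nu> \<in> spectrum M")
    case False
    then have "v = (\<lambda>_. 0)" using v by (auto simp: spectrum_def)
    then show ?thesis by (simp add: vdot_def)
  next
    case True
    have "vdot (eigproj M \<mu> z) v = (if \<mu> = \<nu> then vdot z v else 0)" for \<mu>
      using vdot_eigproj[OF v] vdot_eigenspaces_eq_0[OF sym eigproj_in_eigenspace v] by simp
    then show ?thesis
      using True finite_spectrum[OF sym] by (simp add: r_def vdot_diff_left vdot_sum_left)
  qed
  then have "r = (\<lambda>_. 0)" by (rule orthogonal_to_eigenspaces_imp_zero[OF sym])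
  then show ?thesis by (simp add: r_def fun_eq_iff)
qed

lemma eq_iff_eigproj_eq:
  fixes M :: "'a::finite \<Rightarrow> 'a \<Rightarrow> real"
  assumes "symm M"
  shows "z = w \<longleftrightarrow> (\<forall>\<mu>\<in>spectrum M. eigproj M \<mu> z = eigproj M \<mu> w)"
proof
  assume "\<forall>\<mu>\<in>spectrum M. eigproj M \<mu> z = eigproj M \<mu> w"
  then have "(\<lambda>u. \<Sum>\<mu>\<in>spectrum M. eigproj M \<mu> z u) = (\<lambda>u. \<Sum>\<mu>\<in>spectrum M. eigproj M \<mu> w u)"
    by simp
  then show "z = w" by (simp only: sum_eigproj[OF assms])
qed simp

lemma vdot_self_eq_sum_eigproj:
  fixes M :: "'a::finite \<Rightarrow> 'a \<Rightarrow> real"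
  assumes "symm M"
  shows "vdot z z = (\<Sum>\<mu>\<in>spectrum M. vdot (eigproj M \<mu> z) (eigproj M \<mu> z))"
proof -
  have "vdot z z = (\<Sum>\<mu>\<in>spectrum M. vdot (eigproj M \<mu> z) z)"
    by (subst (1) sum_eigproj[OF assms, symmetric]) (simp add: vdot_sum_left)
  also have "\<dots> = (\<Sum>\<mu>\<in>spectrum M. vdot (eigproj M \<mu> z) (eigproj M \<mu> z))"
    by (intro sum.cong refl) (metis vdot_commute vdot_eigproj eigproj_in_eigenspace)
  finally show ?thesis .
qed

lemma eigproj_lincomb:
  "eigproj M \<mu> (\<lambda>u. a * f u + b * g u) = (\<lambda>u. a * eigproj M \<mu> f u + b * eigproj M \<mu> g u)"
  by (rule eigproj_eqI)
    (simp_all add: eigenspace_lincomb eigproj_in_eigenspace vdot_lincomb_left vdot_eigproj)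

lemma eigproj_scale: "eigproj M \<mu> (\<lambda>u. c * f u) = (\<lambda>u. c * eigproj M \<mu> f u)"
  using eigproj_lincomb[of M \<mu> c f 0 f] by simp

lemma eigproj_diff: "eigproj M \<mu> (\<lambda>u. f u - g u) = (\<lambda>u. eigproj M \<mu> f u - eigproj M \<mu> g u)"
  using eigproj_lincomb[of M \<mu> 1 f "-1" g] by simp

lemma eigproj_mat_vec:
  assumes "symm M"
  shows "eigproj M \<mu> (mat_vec M z) = (\<lambda>u. \<mu> * eigproj M \<mu> z u)"
proof (rule eigproj_eqI)
  have "(\<lambda>u. \<mu> * eigproj M \<mu> z u + 0 * eigproj M \<mu> z u) \<in> eigenspace M \<mu>"
    by (intro eigenspace_lincomb eigproj_in_eigenspace)
  then show "(\<lambda>u. \<mu> * eigproj M \<mu> z u) \<in> eigenspace M \<mu>" by simp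
  fix v assume v: "v \<in> eigenspace M \<mu>"
  have "mat_vec M v = (\<lambda>u. \<mu> * v u)" using v by (simp add: eigenspace_iff fun_eq_iff)
  then have "vdot (mat_vec M z) v = vdot z (\<lambda>u. \<mu> * v u)"
    using vdot_mat_vec_symm[OF assms, of z v] by simp
  also have "\<dots> = \<mu> * vdot z v" by (simp add: vdot_commute[of z] vdot_scale_left)
  finally show "vdot (\<lambda>u. \<mu> * eigproj M \<mu> z u) v = vdot (mat_vec M z) v"
    by (simp add: vdot_scale_left vdot_eigproj[OF v])
qed

section \<open>Chebyshev polynomials\<close>

fun cheb :: "nat \<Rightarrow> real \<Rightarrow> real" where
  "cheb 0 t = 1"
| "cheb (Suc 0) t = t"
| "cheb (Suc (Suc n)) t = 2 * t * cheb (Suc n) t - cheb n t"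

lemma mat_vec_cheb_mat_Suc_Suc:
  "mat_vec (cheb_mat (Suc (Suc n)) M) z =
     (\<lambda>u. 2 * mat_vec M (mat_vec (cheb_mat (Suc n) M) z) u - mat_vec (cheb_mat n M) z u)"
proof -
  have "mat_vec (cheb_mat (Suc (Suc n)) M) z =
      (\<lambda>u. 2 * mat_vec (mat_mult M (cheb_mat (Suc n) M)) z u - mat_vec (cheb_mat n M) z u)"
    by (simp add: mat_vec_def fun_eq_iff left_diff_distrib sum_subtractf sum_distrib_left mult.assoc)
  then show ?thesis by (simp add: mat_vec_mat_mult)
qed

lemma mat_vec_cheb_mat_eigenvector:
  assumes "mat_vec M z = (\<lambda>u. \<mu> * z u)"
  shows "mat_vec (cheb_mat n M) z = (\<lambda>u. cheb n \<mu> * z u)"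
proof (induction n rule: induct_nat_012)
  case (ge2 n)
  show ?case
    by (simp only: mat_vec_cheb_mat_Suc_Suc ge2 mat_vec_scale assms cheb.simps)
      (simp add: algebra_simps)
qed (simp_all add: mat_vec_id_mat assms)

lemma eigproj_cheb_mat:
  assumes "symm M"
  shows "eigproj M \<mu> (mat_vec (cheb_mat n M) z) = (\<lambda>u. cheb n \<mu> * eigproj M \<mu> z u)"
proof (induction n rule: induct_nat_012)
  case (ge2 n)
  have "eigproj M \<mu> (mat_vec (cheb_mat (Suc (Suc n)) M) z) =
      (\<lambda>u. 2 * eigproj M \<mu> (mat_vec M (mat_vec (cheb_mat (Suc n) M) z)) u
           - eigproj M \<mu> (mat_vec (cheb_mat n M) z) u)"
    by (simp only: mat_vec_cheb_mat_Suc_Suc eigproj_diff eigproj_scale)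
  then show ?case by (simp add: eigproj_mat_vec[OF assms] ge2 algebra_simps)
qed (simp_all add: mat_vec_id_mat eigproj_mat_vec[OF assms])

lemma cheb_cos: "cheb n (cos t) = cos (real n * t)"
proof (induction n rule: induct_nat_012)
  case (ge2 n)
  have "cos (real n * t) = cos (real (Suc n) * t - t)" by (simp add: algebra_simps)
  moreover have "cos (real (Suc (Suc n)) * t) = cos (real (Suc n) * t + t)" by (simp add: algebra_simps)
  ultimately show ?case by (simp add: ge2 cos_add cos_diff)
qed simp_all

lemma cheb_eq_cos_arccos:
  assumes "\<bar>\<mu>\<bar> \<le> 1"
  shows "cheb n \<mu> = cos (real n * arccos \<mu>)"
proof -
  have "cos (arccos \<mu>) = \<mu>" using assms by (intro cos_arccos) auto
  then show ?thesis using cheb_cos[of n "arccos \<mu>"] by simp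
qed

lemma cheb_sq_le_1:
  assumes "\<bar>\<mu>\<bar> \<le> 1"
  shows "(cheb n \<mu>)\<^sup>2 \<le> 1"
  by (simp add: cheb_eq_cos_arccos[OF assms] abs_square_le_1)

lemma cheb_cos_int_mult_pi:
  assumes "0 < \<tau>"
  shows "cheb \<tau> (cos (of_int j / real \<tau> * pi)) = (if even j then 1 else -1)"
proof -
  have "real \<tau> * (of_int j / real \<tau> * pi) = pi * of_int j" using assms by simp
  then show ?thesis by (simp add: cheb_cos)
qed

lemma cheb_eq_1_iff:
  assumes "\<bar>\<mu>\<bar> \<le> 1" "0 < \<tau>"
  shows "cheb \<tau> \<mu> = 1 \<longleftrightarrow> (\<exists>j::int. even j \<and> \<mu> = cos (of_int j / real \<tau> * pi))"
proof
  assume "cheb \<tau> \<mu> = 1"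
  then have "cos (real \<tau> * arccos \<mu>) = 1" by (simp add: cheb_eq_cos_arccos[OF assms(1)])
  then obtain n :: int where "real \<tau> * arccos \<mu> = of_int n * 2 * pi"
    using cos_one_2pi_int by blast
  then have "arccos \<mu> = of_int (2 * n) / real \<tau> * pi" using assms(2) by (simp add: field_simps)
  moreover have "cos (arccos \<mu>) = \<mu>" using assms(1) by (intro cos_arccos) auto
  ultimately show "\<exists>j::int. even j \<and> \<mu> = cos (of_int j / real \<tau> * pi)"
    by (intro exI[of _ "2 * n"]) simp
qed (use cheb_cos_int_mult_pi[OF assms(2)] in auto)

lemma cheb_eq_minus_1_iff:
  assumes "\<bar>\<mu>\<bar> \<le> 1" "0 < \<tau>"
  shows "cheb \<tau> \<mu> = -1 \<longleftrightarrow> (\<exists>j::int. odd j \<and> \<mu> = cos (of_int j / real \<tau> * pi))"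
proof
  assume "cheb \<tau> \<mu> = -1"
  then have "cos (real \<tau> * arccos \<mu> - pi) = 1" by (simp add: cheb_eq_cos_arccos[OF assms(1)])
  then obtain n :: int where "real \<tau> * arccos \<mu> - pi = of_int n * 2 * pi"
    using cos_one_2pi_int by blast
  then have "arccos \<mu> = of_int (2 * n + 1) / real \<tau> * pi" using assms(2) by (simp add: field_simps)
  moreover have "cos (arccos \<mu>) = \<mu>" using assms(1) by (intro cos_arccos) auto
  ultimately show "\<exists>j::int. odd j \<and> \<mu> = cos (of_int j / real \<tau> * pi)"
    by (intro exI[of _ "2 * n + 1"]) simp
qed (use cheb_cos_int_mult_pi[OF assms(2)] in auto)

section \<open>The spectral form of the transfer condition\<close>

lemma sq_multiplier_eq_1_if_norm_preserved:
  fixes M :: "'a::finite \<Rightarrow> 'a \<Rightarrow> real"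
  assumes sym: "symm M"
    and le1: "\<And>\<mu>. \<mu> \<in> spectrum M \<Longrightarrow> (c \<mu>)\<^sup>2 \<le> 1"
    and mult: "\<And>\<mu>. \<mu> \<in> spectrum M \<Longrightarrow> eigproj M \<mu> w = (\<lambda>u. c \<mu> * eigproj M \<mu> z u)"
    and norm: "vdot w w = vdot z z"
    and \<mu>: "\<mu> \<in> spectrum M" and nz: "eigproj M \<mu> z \<noteq> (\<lambda>_. 0)"
  shows "(c \<mu>)\<^sup>2 = 1"
proof -
  define n where "n \<nu> = vdot (eigproj M \<nu> z) (eigproj M \<nu> z)" for \<nu>
  have "vdot w w = (\<Sum>\<nu>\<in>spectrum M. vdot (eigproj M \<nu> w) (eigproj M \<nu> w))"
    by (rule vdot_self_eq_sum_eigproj[OF sym])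
  also have "\<dots> = (\<Sum>\<nu>\<in>spectrum M. (c \<nu>)\<^sup>2 * n \<nu>)"
  proof (rule sum.cong[OF refl])
    fix \<nu> assume "\<nu> \<in> spectrum M"
    then show "vdot (eigproj M \<nu> w) (eigproj M \<nu> w) = (c \<nu>)\<^sup>2 * n \<nu>"
      by (simp only: mult vdot_scale_left vdot_scale_right n_def power2_eq_square mult.assoc)
  qed
  finally have sum_w: "vdot w w = (\<Sum>\<nu>\<in>spectrum M. (c \<nu>)\<^sup>2 * n \<nu>)" .
  have sum_z: "vdot z z = (\<Sum>\<nu>\<in>spectrum M. n \<nu>)"
    unfolding n_def by (rule vdot_self_eq_sum_eigproj[OF sym])
  have "(\<Sum>\<nu>\<in>spectrum M. (1 - (c \<nu>)\<^sup>2) * n \<nu>) = vdot z z - vdot w w"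
    unfolding sum_w sum_z by (simp add: left_diff_distrib sum_subtractf)
  then have sum0: "(\<Sum>\<nu>\<in>spectrum M. (1 - (c \<nu>)\<^sup>2) * n \<nu>) = 0"
    using norm by simp
  have nonneg: "0 \<le> (1 - (c \<nu>)\<^sup>2) * n \<nu>" if "\<nu> \<in> spectrum M" for \<nu>
    using le1[OF that] vdot_self_nonneg[of "eigproj M \<nu> z"] unfolding n_def
    by (intro mult_nonneg_nonneg) simp_all
  have "(1 - (c \<mu>)\<^sup>2) * n \<mu> = 0"
    using sum_nonneg_eq_0_iff[where f = "\<lambda>\<nu>. (1 - (c \<nu>)\<^sup>2) * n \<nu>", OF finite_spectrum[OF sym]]
      nonneg sum0 \<mu> by blast
  moreover have "n \<mu> \<noteq> 0" using nz by (simp add: n_def vdot_self_eq_0_iff)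
  ultimately show ?thesis by simp
qed

definition spectral_cond :: "('a::finite \<Rightarrow> 'a \<Rightarrow> real) \<Rightarrow> 'a \<Rightarrow> 'a \<Rightarrow> nat \<Rightarrow> real \<Rightarrow> bool" where
  "spectral_cond M x y \<tau> \<gamma> \<longleftrightarrow>
     (\<forall>\<mu>\<in>spectrum M. eigproj M \<mu> (unitv x) = eigproj M \<mu> (unitv y) \<or>
        eigproj M \<mu> (unitv x) = (\<lambda>u. - eigproj M \<mu> (unitv y) u)) \<and>
     (\<forall>\<mu>\<in>eig_support M (unitv x). eigproj M \<mu> (unitv x) = (\<lambda>u. \<gamma> * eigproj M \<mu> (unitv y) u) \<longrightarrow>
        (\<exists>j::int. even j \<and> \<mu> = cos (real_of_int j / real \<tau> * pi))) \<and>
     (\<forall>\<mu>\<in>eig_support M (unitv x). eigproj M \<mu> (unitv x) = (\<lambda>u. - \<gamma> * eigproj M \<mu> (unitv y) u) \<longrightarrow>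
        (\<exists>j::int. odd j \<and> \<mu> = cos (real_of_int j / real \<tau> * pi)))"

lemma condC_iff_spectral_cond: "condC E x y \<tau> \<gamma> \<longleftrightarrow> spectral_cond (discr E) x y \<tau> \<gamma>"
  unfolding condC_def spectral_cond_def Let_def ..

lemma mat_vec_cheb_mat_eq_iff_eigproj:
  fixes M :: "'a::finite \<Rightarrow> 'a \<Rightarrow> real"
  assumes "symm M" "\<gamma> * \<gamma> = 1"
  shows "mat_vec (cheb_mat n M) z = (\<lambda>u. \<gamma> * w u) \<longleftrightarrow>
    (\<forall>\<mu>\<in>spectrum M. eigproj M \<mu> w = (\<lambda>u. \<gamma> * cheb n \<mu> * eigproj M \<mu> z u))"
proof -
  have key: "t * a = \<gamma> * b \<longleftrightarrow> b = \<gamma> * t * a" for t a b :: real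
  proof
    assume "t * a = \<gamma> * b"
    then have "\<gamma> * t * a = \<gamma> * \<gamma> * b" by (simp add: mult.assoc)
    then show "b = \<gamma> * t * a" using assms(2) by simp
  next
    assume "b = \<gamma> * t * a"
    then have "\<gamma> * b = \<gamma> * \<gamma> * t * a" by (simp add: mult.assoc)
    then show "t * a = \<gamma> * b" using assms(2) by simp
  qed
  show ?thesis
    by (subst eq_iff_eigproj_eq[OF assms(1)])
      (simp add: eigproj_cheb_mat[OF assms(1)] eigproj_scale fun_eq_iff key)
qed

lemma cheb_eq_pm1_on_eig_support:
  fixes M :: "'a::finite \<Rightarrow> 'a \<Rightarrow> real"
  assumes sym: "symm M" and bnd: "\<And>\<mu>. \<mu> \<in> spectrum M \<Longrightarrow> \<bar>\<mu>\<bar> \<le> 1"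
    and \<gamma>: "\<gamma> = 1 \<or> \<gamma> = -1"
    and mult: "\<forall>\<mu>\<in>spectrum M. eigproj M \<mu> (unitv y) = (\<lambda>u. \<gamma> * cheb \<tau> \<mu> * eigproj M \<mu> (unitv x) u)"
    and \<mu>: "\<mu> \<in> eig_support M (unitv x)"
  shows "cheb \<tau> \<mu> = 1 \<or> cheb \<tau> \<mu> = -1"
proof -
  have "(\<gamma> * cheb \<tau> \<mu>)\<^sup>2 = 1"
  proof (rule sq_multiplier_eq_1_if_norm_preserved[OF sym, where c = "\<lambda>\<nu>. \<gamma> * cheb \<tau> \<nu>"
        and w = "unitv y" and z = "unitv x"])
    show "(\<gamma> * cheb \<tau> \<nu>)\<^sup>2 \<le> 1" if "\<nu> \<in> spectrum M" for \<nu>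
      using cheb_sq_le_1[OF bnd[OF that]] \<gamma> by (auto simp: power_mult_distrib)
    show "eigproj M \<nu> (unitv y) = (\<lambda>u. \<gamma> * cheb \<tau> \<nu> * eigproj M \<nu> (unitv x) u)"
      if "\<nu> \<in> spectrum M" for \<nu>
      using mult that by blast
    show "vdot (unitv y) (unitv y) = vdot (unitv x) (unitv x)"
      by (simp only: vdot_unitv_left) (simp add: unitv_def)
  qed (use \<mu> in \<open>simp_all add: eig_support_def\<close>)
  then show ?thesis using \<gamma> by (auto simp: power_mult_distrib power2_eq_1_iff)
qed

lemma spectral_cond_if_cheb_multiplier:
  fixes M :: "'a::finite \<Rightarrow> 'a \<Rightarrow> real"
  assumes sym: "symm M" and bnd: "\<And>\<mu>. \<mu> \<in> spectrum M \<Longrightarrow> \<bar>\<mu>\<bar> \<le> 1" and "0 < \<tau>"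
    and \<gamma>: "\<gamma> = 1 \<or> \<gamma> = -1"
    and mult: "\<forall>\<mu>\<in>spectrum M. eigproj M \<mu> (unitv y) = (\<lambda>u. \<gamma> * cheb \<tau> \<mu> * eigproj M \<mu> (unitv x) u)"
  shows "spectral_cond M x y \<tau> \<gamma>"
proof -
  let ?Ex = "\<lambda>\<mu>. eigproj M \<mu> (unitv x)" and ?Ey = "\<lambda>\<mu>. eigproj M \<mu> (unitv y)"
  have \<gamma>\<gamma>: "\<gamma> * \<gamma> = 1" using \<gamma> by auto
  have cheb_sign: "cheb \<tau> \<mu> = s * \<gamma>"
    if supp: "\<mu> \<in> eig_support M (unitv x)" and s: "?Ex \<mu> = (\<lambda>u. s * ?Ey \<mu> u)" "s * s = 1" for \<mu> s
  proof -
    obtain u where u: "?Ex \<mu> u \<noteq> 0" using supp by (auto simp: eig_support_def fun_eq_iff)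
    have "?Ex \<mu> u * 1 = ?Ex \<mu> u * (s * \<gamma> * cheb \<tau> \<mu>)"
      using fun_cong[OF s(1), of u] mult supp by (simp add: eig_support_def mult_ac)
    then have one: "s * \<gamma> * cheb \<tau> \<mu> = 1" using u by (simp only: mult_cancel_left) simp
    have "cheb \<tau> \<mu> = (s * s) * (\<gamma> * \<gamma>) * cheb \<tau> \<mu>" using s(2) \<gamma>\<gamma> by simp
    also have "\<dots> = s * \<gamma> * (s * \<gamma> * cheb \<tau> \<mu>)" by (simp add: mult_ac)
    finally show ?thesis by (simp add: one)
  qed
  show ?thesis
    unfolding spectral_cond_def
  proof (intro conjI ballI impI)
    fix \<mu> assume \<mu>: "\<mu> \<in> spectrum M"
    show "?Ex \<mu> = ?Ey \<mu> \<or> ?Ex \<mu> = (\<lambda>u. - ?Ey \<mu> u)"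
    proof (cases "?Ex \<mu> = (\<lambda>_. 0)")
      case True
      then show ?thesis using mult \<mu> by (simp add: fun_eq_iff)
    next
      case False
      then have supp: "\<mu> \<in> eig_support M (unitv x)" using \<mu> by (simp add: eig_support_def)
      show ?thesis
        using cheb_eq_pm1_on_eig_support[OF sym bnd \<gamma> mult supp] \<gamma> mult \<mu> by (auto simp: fun_eq_iff)
    qed
  next
    fix \<mu> assume "\<mu> \<in> eig_support M (unitv x)" "?Ex \<mu> = (\<lambda>u. \<gamma> * ?Ey \<mu> u)"
    then have "cheb \<tau> \<mu> = 1" using cheb_sign[of \<mu> \<gamma>] \<gamma>\<gamma> by simp
    then show "\<exists>j::int. even j \<and> \<mu> = cos (of_int j / real \<tau> * pi)"
      using cheb_eq_1_iff bnd \<open>\<mu> \<in> eig_support M (unitv x)\<close> \<open>0 < \<tau>\<close>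
      by (auto simp: eig_support_def)
  next
    fix \<mu> assume "\<mu> \<in> eig_support M (unitv x)" "?Ex \<mu> = (\<lambda>u. - \<gamma> * ?Ey \<mu> u)"
    then have "cheb \<tau> \<mu> = -1" using cheb_sign[of \<mu> "- \<gamma>"] \<gamma>\<gamma> by simp
    then show "\<exists>j::int. odd j \<and> \<mu> = cos (of_int j / real \<tau> * pi)"
      using cheb_eq_minus_1_iff bnd \<open>\<mu> \<in> eig_support M (unitv x)\<close> \<open>0 < \<tau>\<close>
      by (auto simp: eig_support_def)
  qed
qed

lemma cheb_multiplier_if_spectral_cond:
  fixes M :: "'a::finite \<Rightarrow> 'a \<Rightarrow> real"
  assumes bnd: "\<And>\<mu>. \<mu> \<in> spectrum M \<Longrightarrow> \<bar>\<mu>\<bar> \<le> 1" and \<tau>: "0 < \<tau>"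
    and \<gamma>: "\<gamma> = 1 \<or> \<gamma> = -1" and C: "spectral_cond M x y \<tau> \<gamma>"
  shows "\<forall>\<mu>\<in>spectrum M. eigproj M \<mu> (unitv y) = (\<lambda>u. \<gamma> * cheb \<tau> \<mu> * eigproj M \<mu> (unitv x) u)"
proof
  let ?Ex = "\<lambda>\<mu>. eigproj M \<mu> (unitv x)" and ?Ey = "\<lambda>\<mu>. eigproj M \<mu> (unitv y)"
  have sign: "\<And>\<mu>. \<mu> \<in> spectrum M \<Longrightarrow> ?Ex \<mu> = ?Ey \<mu> \<or> ?Ex \<mu> = (\<lambda>u. - ?Ey \<mu> u)"
    and even: "\<And>\<mu>. \<mu> \<in> eig_support M (unitv x) \<Longrightarrow> ?Ex \<mu> = (\<lambda>u. \<gamma> * ?Ey \<mu> u) \<Longrightarrow>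
      \<exists>j::int. even j \<and> \<mu> = cos (of_int j / real \<tau> * pi)"
    and odd: "\<And>\<mu>. \<mu> \<in> eig_support M (unitv x) \<Longrightarrow> ?Ex \<mu> = (\<lambda>u. - \<gamma> * ?Ey \<mu> u) \<Longrightarrow>
      \<exists>j::int. odd j \<and> \<mu> = cos (of_int j / real \<tau> * pi)"
    using C unfolding spectral_cond_def by blast+
  fix \<mu> assume \<mu>: "\<mu> \<in> spectrum M"
  show "?Ey \<mu> = (\<lambda>u. \<gamma> * cheb \<tau> \<mu> * ?Ex \<mu> u)"
  proof (cases "?Ex \<mu> = (\<lambda>_. 0)")
    case True
    then show ?thesis using sign[OF \<mu>] by (auto simp: fun_eq_iff)
  next
    case False
    then have supp: "\<mu> \<in> eig_support M (unitv x)" using \<mu> by (simp add: eig_support_def)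
    from sign[OF \<mu>] \<gamma> have "?Ex \<mu> = (\<lambda>u. \<gamma> * ?Ey \<mu> u) \<or> ?Ex \<mu> = (\<lambda>u. - \<gamma> * ?Ey \<mu> u)"
      by (auto simp: fun_eq_iff)
    then show ?thesis
    proof
      assume e: "?Ex \<mu> = (\<lambda>u. \<gamma> * ?Ey \<mu> u)"
      with even[OF supp] have "cheb \<tau> \<mu> = 1" using cheb_eq_1_iff[OF bnd[OF \<mu>] \<tau>] by blast
      then show ?thesis using e \<gamma> by (auto simp: fun_eq_iff)
    next
      assume e: "?Ex \<mu> = (\<lambda>u. - \<gamma> * ?Ey \<mu> u)"
      with odd[OF supp] have "cheb \<tau> \<mu> = -1" using cheb_eq_minus_1_iff[OF bnd[OF \<mu>] \<tau>] by blast
      then show ?thesis using e \<gamma> by (auto simp: fun_eq_iff)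
    qed
  qed
qed

lemma cheb_transfer_iff_spectral_cond:
  fixes M :: "'a::finite \<Rightarrow> 'a \<Rightarrow> real"
  assumes "symm M" "\<And>\<mu>. \<mu> \<in> spectrum M \<Longrightarrow> \<bar>\<mu>\<bar> \<le> 1" "0 < \<tau>" "\<gamma> = 1 \<or> \<gamma> = -1"
  shows "mat_vec (cheb_mat \<tau> M) (unitv x) = (\<lambda>u. \<gamma> * unitv y u) \<longleftrightarrow> spectral_cond M x y \<tau> \<gamma>"
proof -
  have "\<gamma> * \<gamma> = 1" using assms(4) by auto
  then show ?thesis
    using mat_vec_cheb_mat_eq_iff_eigproj[OF assms(1)] spectral_cond_if_cheb_multiplier[OF assms]
      cheb_multiplier_if_spectral_cond[OF assms(2-4)] by blast
qed

section \<open>The discriminant and the walk on real arc vectors\<close>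

lemma simple_graph_sym: "simple_graph E \<Longrightarrow> E u v \<longleftrightarrow> E v u"
  by (auto simp: simple_graph_def)

lemma mem_arcs_iff [simp]: "(u, v) \<in> arcs E \<longleftrightarrow> E u v"
  by (simp add: arcs_def)

lemma deg_eq_0_iff: "deg E u = 0 \<longleftrightarrow> (\<forall>v. \<not> E u v)"
  by (simp add: deg_def)

lemma sum_adjacent_const: "(\<Sum>v\<in>UNIV. if E u v then c else 0) = real (deg E u) * c"
  by (simp add: sum.If_cases deg_def)

lemma sum_arcs:
  fixes E :: "'a::finite \<Rightarrow> 'a \<Rightarrow> bool"
  shows "(\<Sum>a\<in>arcs E. f a) = (\<Sum>p\<in>UNIV. \<Sum>q\<in>UNIV. if E p q then f (p, q) else 0)"
proof -
  have "(\<Sum>a\<in>arcs E. f a) = (\<Sum>(p, q)\<in>Sigma UNIV (\<lambda>p. {q. E p q}). f (p, q))"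
    by (rule sum.cong) (auto simp: arcs_def)
  also have "\<dots> = (\<Sum>p\<in>UNIV. \<Sum>q\<in>{q. E p q}. f (p, q))"
    by (rule sum.Sigma[symmetric]) auto
  also have "\<dots> = (\<Sum>p\<in>UNIV. \<Sum>q\<in>UNIV. if E p q then f (p, q) else 0)"
    by (simp add: sum.If_cases)
  finally show ?thesis .
qed

lemma bd_arc: "bd E u (p, q) = (if E p q \<and> q = u then 1 / sqrt (real (deg E u)) else 0)"
  by (simp add: bd_def arc_tgt_def)

lemma sum_shift:
  fixes h :: "'a::finite \<times> 'a \<Rightarrow> 'b::real_algebra_1"
  assumes "simple_graph E"
  shows "(\<Sum>b\<in>arcs E. of_real (shift E a b) * h b) = (if a \<in> arcs E then h (arc_inv a) else 0)"
proof -
  have "arc_inv a \<in> arcs E \<longleftrightarrow> a \<in> arcs E"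
    using simple_graph_sym[OF assms] by (cases a) (simp add: arc_inv_def)
  moreover have "of_real (shift E a b) * h b = (if b = arc_inv a then (if a \<in> arcs E then h b else 0) else 0)"
    if "b \<in> arcs E" for b
    using that by (cases a, cases b) (auto simp: shift_def arc_inv_def)
  ultimately show ?thesis by (simp cong: sum.cong)
qed

lemma discr_eq:
  assumes "simple_graph E"
  shows "discr E u v = (if E u v then 1 / (sqrt (real (deg E u)) * sqrt (real (deg E v))) else 0)"
proof -
  have "discr E u v = (\<Sum>a\<in>arcs E. bd E u a * bd E v (arc_inv a))"
    unfolding discr_def
    by (rule sum.cong[OF refl])
      (simp add: mult.assoc sum_distrib_left[symmetric] sum_shift[OF assms, where 'b = real, simplified])
  also have "\<dots> = (\<Sum>p\<in>UNIV. \<Sum>q\<in>UNIV.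
      if q = u then (if p = v then (if E v u then 1 / (sqrt (real (deg E u)) * sqrt (real (deg E v))) else 0) else 0) else 0)"
    unfolding sum_arcs
    by (intro sum.cong refl) (use simple_graph_sym[OF assms, of u v] in \<open>auto simp: bd_arc arc_inv_def\<close>)
  also have "\<dots> = (if E v u then 1 / (sqrt (real (deg E u)) * sqrt (real (deg E v))) else 0)"
    by simp
  finally show ?thesis by (simp only: simple_graph_sym[OF assms, of v u])
qed

lemma symm_discr: "simple_graph E \<Longrightarrow> symm (discr E)"
  by (auto simp: symm_def discr_eq simple_graph_sym[of E])

text \<open>All states in the theorem are real, so the walk is studied on real arc vectors;
  \<open>dstar_of_real\<close> and \<open>evol_of_real\<close> transfer the results to the complex operators.\<close>

definition dstar_re :: "('a::finite \<Rightarrow> 'a \<Rightarrow> bool) \<Rightarrow> ('a \<Rightarrow> real) \<Rightarrow> 'a \<times> 'a \<Rightarrow> real" where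
  "dstar_re E g a = (\<Sum>u\<in>UNIV. bd E u a * g u)"

definition dmul_re :: "('a::finite \<Rightarrow> 'a \<Rightarrow> bool) \<Rightarrow> ('a \<times> 'a \<Rightarrow> real) \<Rightarrow> 'a \<Rightarrow> real" where
  "dmul_re E w u = (\<Sum>a\<in>arcs E. bd E u a * w a)"

definition shift_re :: "('a::finite \<Rightarrow> 'a \<Rightarrow> bool) \<Rightarrow> ('a \<times> 'a \<Rightarrow> real) \<Rightarrow> 'a \<times> 'a \<Rightarrow> real" where
  "shift_re E w a = (if a \<in> arcs E then w (arc_inv a) else 0)"

definition walk :: "('a::finite \<Rightarrow> 'a \<Rightarrow> bool) \<Rightarrow> ('a \<times> 'a \<Rightarrow> real) \<Rightarrow> 'a \<times> 'a \<Rightarrow> real" where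
  "walk E w = shift_re E (\<lambda>a. 2 * dstar_re E (dmul_re E w) a - w a)"

definition arc_dot :: "('a::finite \<Rightarrow> 'a \<Rightarrow> bool) \<Rightarrow> ('a \<times> 'a \<Rightarrow> real) \<Rightarrow> ('a \<times> 'a \<Rightarrow> real) \<Rightarrow> real" where
  "arc_dot E w z = (\<Sum>a\<in>arcs E. w a * z a)"

lemma dstar_of_real: "dstar E (\<lambda>u. of_real (g u)) = (\<lambda>a. of_real (dstar_re E g a))"
  by (simp add: dstar_def dstar_re_def fun_eq_iff)

lemma dmul_of_real: "dmul E (\<lambda>a. of_real (w a)) = (\<lambda>u. of_real (dmul_re E w u))"
  by (simp add: dmul_def dmul_re_def fun_eq_iff)

lemma evol_of_real:
  assumes "simple_graph E"
  shows "evol E (\<lambda>a. of_real (w a)) = (\<lambda>a. of_real (walk E w a))"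
proof
  fix a
  have "evol E (\<lambda>a. of_real (w a)) a =
      (\<Sum>b\<in>arcs E. of_real (shift E a b) * of_real (2 * dstar_re E (dmul_re E w) b - w b))"
    by (simp add: evol_def dmul_of_real dstar_of_real)
  then show "evol E (\<lambda>a. of_real (w a)) a = of_real (walk E w a)"
    by (simp add: sum_shift[OF assms] walk_def shift_re_def)
qed

lemma evol_iter_of_real:
  "simple_graph E \<Longrightarrow> (evol E ^^ n) (\<lambda>a. of_real (w a)) = (\<lambda>a. of_real ((walk E ^^ n) w a))"
  by (induction n) (simp_all add: evol_of_real)

lemma dstar_re_arc: "dstar_re E g (p, q) = (if E p q then g q / sqrt (real (deg E q)) else 0)"
proof -
  have "dstar_re E g (p, q) = (\<Sum>u\<in>UNIV. if u = q then (if E p q then g q / sqrt (real (deg E q)) else 0) else 0)"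
    unfolding dstar_re_def by (rule sum.cong) (auto simp: bd_arc)
  then show ?thesis by simp
qed

lemma dstar_re_outside_arcs: "a \<notin> arcs E \<Longrightarrow> dstar_re E g a = 0"
  by (cases a) (simp add: dstar_re_arc)

lemma dmul_re_eq: "dmul_re E w u = (\<Sum>p\<in>UNIV. if E p u then w (p, u) / sqrt (real (deg E u)) else 0)"
proof -
  have "dmul_re E w u = (\<Sum>p\<in>UNIV. \<Sum>q\<in>UNIV. if q = u then (if E p u then w (p, u) / sqrt (real (deg E u)) else 0) else 0)"
    unfolding dmul_re_def sum_arcs by (intro sum.cong refl) (auto simp: bd_arc)
  then show ?thesis by simp
qed

lemma dmul_re_isolated: "simple_graph E \<Longrightarrow> deg E u = 0 \<Longrightarrow> dmul_re E w u = 0"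
  by (simp add: dmul_re_eq deg_eq_0_iff simple_graph_sym[of E _ u])

lemma dmul_re_diff: "dmul_re E (\<lambda>a. c * w a - z a) u = c * dmul_re E w u - dmul_re E z u"
  by (simp add: dmul_re_def sum_subtractf sum_distrib_left algebra_simps)

lemma dmul_re_scale: "dmul_re E (\<lambda>a. c * w a) u = c * dmul_re E w u"
  by (simp add: dmul_re_def sum_distrib_left mult.left_commute)

lemma dstar_re_scale: "dstar_re E (\<lambda>u. c * g u) = (\<lambda>a. c * dstar_re E g a)"
  by (simp add: dstar_re_def fun_eq_iff sum_distrib_left mult.left_commute)

lemma dmul_re_cong: "(\<And>a. a \<in> arcs E \<Longrightarrow> w a = z a) \<Longrightarrow> dmul_re E w = dmul_re E z"
  by (simp add: dmul_re_def fun_eq_iff)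

lemma dmul_re_dstar_re:
  assumes "simple_graph E"
  shows "dmul_re E (dstar_re E g) u = (if deg E u = 0 then 0 else g u)"
proof (cases "deg E u = 0")
  case False
  have "dmul_re E (dstar_re E g) u = (\<Sum>p\<in>UNIV. if E u p then g u / (sqrt (real (deg E u)))\<^sup>2 else 0)"
    unfolding dmul_re_eq
    by (intro sum.cong refl) (simp add: dstar_re_arc simple_graph_sym[OF assms, of _ u] power2_eq_square)
  also have "\<dots> = g u" using False by (simp add: sum_adjacent_const)
  finally show ?thesis using False by simp
qed (simp add: dmul_re_isolated[OF assms])

lemma dmul_re_dstar_re_eq:
  "simple_graph E \<Longrightarrow> (\<And>u. deg E u = 0 \<Longrightarrow> g u = 0) \<Longrightarrow> dmul_re E (dstar_re E g) = g"
  by (auto simp: dmul_re_dstar_re fun_eq_iff)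

lemma dmul_re_shift_re_dstar_re:
  assumes "simple_graph E"
  shows "dmul_re E (shift_re E (dstar_re E g)) = mat_vec (discr E) g"
proof
  fix u
  show "dmul_re E (shift_re E (dstar_re E g)) u = mat_vec (discr E) g u"
    unfolding dmul_re_eq mat_vec_def
    by (intro sum.cong refl)
      (auto simp: shift_re_def arc_inv_def dstar_re_arc discr_eq[OF assms] simple_graph_sym[OF assms, of _ u])
qed

lemma arc_dot_dstar_re: "arc_dot E (dstar_re E g) w = vdot g (dmul_re E w)"
proof -
  have "arc_dot E (dstar_re E g) w = (\<Sum>a\<in>arcs E. \<Sum>u\<in>UNIV. g u * (bd E u a * w a))"
    unfolding arc_dot_def dstar_re_def sum_distrib_right by (simp add: mult_ac)
  also have "\<dots> = vdot g (dmul_re E w)"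
    by (subst sum.swap) (simp add: vdot_def dmul_re_def sum_distrib_left)
  finally show ?thesis .
qed

lemma arc_dot_shift_re:
  assumes "simple_graph E"
  shows "arc_dot E (shift_re E w) (shift_re E z) = arc_dot E w z"
proof -
  have "arc_dot E (shift_re E w) (shift_re E z) = (\<Sum>p\<in>UNIV. \<Sum>q\<in>UNIV. if E q p then w (q, p) * z (q, p) else 0)"
    unfolding arc_dot_def sum_arcs
    by (intro sum.cong refl) (simp add: shift_re_def arc_inv_def simple_graph_sym[OF assms])
  also have "\<dots> = arc_dot E w z"
    unfolding arc_dot_def sum_arcs by (rule sum.swap)
  finally show ?thesis .
qed

lemma walk_iter_dstar_re_outside_arcs: "a \<notin> arcs E \<Longrightarrow> (walk E ^^ n) (dstar_re E g) a = 0"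
  by (cases n) (simp_all add: walk_def shift_re_def dstar_re_outside_arcs)

lemma shift_re_shift_re:
  assumes "simple_graph E" "a \<in> arcs E"
  shows "shift_re E (shift_re E w) a = w a"
  using assms by (cases a) (simp add: shift_re_def arc_inv_def simple_graph_sym)

lemma dmul_re_walk:
  assumes "simple_graph E"
  shows "dmul_re E (walk E w) = (\<lambda>u. 2 * mat_vec (discr E) (dmul_re E w) u - dmul_re E (shift_re E w) u)"
proof
  fix u
  have "walk E w = (\<lambda>a. 2 * shift_re E (dstar_re E (dmul_re E w)) a - shift_re E w a)"
    by (simp add: walk_def shift_re_def fun_eq_iff)
  then have "dmul_re E (walk E w) u =
      2 * dmul_re E (shift_re E (dstar_re E (dmul_re E w))) u - dmul_re E (shift_re E w) u"
    by (simp only: dmul_re_diff)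
  then show "dmul_re E (walk E w) u = 2 * mat_vec (discr E) (dmul_re E w) u - dmul_re E (shift_re E w) u"
    by (simp add: dmul_re_shift_re_dstar_re[OF assms])
qed

lemma dmul_re_shift_re_walk:
  assumes sg: "simple_graph E"
  shows "dmul_re E (shift_re E (walk E w)) = dmul_re E w"
proof -
  have "dmul_re E (shift_re E (walk E w)) = dmul_re E (\<lambda>a. 2 * dstar_re E (dmul_re E w) a - w a)"
    by (rule dmul_re_cong) (simp add: walk_def shift_re_shift_re[OF sg])
  also have "\<dots> = dmul_re E w"
    using dmul_re_dstar_re_eq[OF sg dmul_re_isolated[OF sg]] by (simp add: dmul_re_diff fun_eq_iff)
  finally show ?thesis .
qed

text \<open>With \<open>a\<^sub>n = d U\<^sup>n d\<^sup>* f\<close>, the two lemmas above give \<open>a\<^sub>n\<^sub>+\<^sub>2 = 2 P a\<^sub>n\<^sub>+\<^sub>1 - a\<^sub>n\<close>,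
  the Chebyshev recurrence.\<close>

lemma dmul_re_walk_iter_dstar_re:
  assumes sg: "simple_graph E" and g: "\<And>u. deg E u = 0 \<Longrightarrow> g u = 0"
  shows "dmul_re E ((walk E ^^ n) (dstar_re E g)) = mat_vec (cheb_mat n (discr E)) g"
proof (induction n rule: induct_nat_012)
  case 0
  show ?case by (simp add: dmul_re_dstar_re_eq[OF sg g] mat_vec_id_mat)
next
  case 1
  show ?case
    by (simp add: dmul_re_walk[OF sg] dmul_re_dstar_re_eq[OF sg g] dmul_re_shift_re_dstar_re[OF sg])
next
  case (ge2 n)
  have "dmul_re E ((walk E ^^ Suc (Suc n)) (dstar_re E g)) =
      (\<lambda>u. 2 * mat_vec (discr E) (dmul_re E ((walk E ^^ Suc n) (dstar_re E g))) u
           - dmul_re E ((walk E ^^ n) (dstar_re E g)) u)"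
    by (simp add: dmul_re_walk[OF sg] dmul_re_shift_re_walk[OF sg])
  then show ?case by (simp only: ge2 mat_vec_cheb_mat_Suc_Suc)
qed

lemma arc_dot_walk:
  assumes sg: "simple_graph E"
  shows "arc_dot E (walk E w) (walk E w) = arc_dot E w w"
proof -
  define p where "p = dstar_re E (dmul_re E w)"
  have pp: "arc_dot E p p = arc_dot E p w"
    using dmul_re_dstar_re_eq[OF sg dmul_re_isolated[OF sg]]
    by (simp add: p_def arc_dot_dstar_re)
  have "arc_dot E (walk E w) (walk E w) = arc_dot E (\<lambda>a. 2 * p a - w a) (\<lambda>a. 2 * p a - w a)"
    by (simp add: walk_def arc_dot_shift_re[OF sg] p_def)
  also have "\<dots> = 4 * arc_dot E p p - 4 * arc_dot E p w + arc_dot E w w"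
  proof -
    have "(2 * p a - w a) * (2 * p a - w a) = 4 * (p a * p a) - 4 * (p a * w a) + w a * w a" for a
      by (simp add: algebra_simps)
    then show ?thesis by (simp add: arc_dot_def sum.distrib sum_subtractf sum_distrib_left)
  qed
  finally show ?thesis by (simp add: pp)
qed

lemma arc_dot_walk_iter:
  "simple_graph E \<Longrightarrow> arc_dot E ((walk E ^^ n) w) ((walk E ^^ n) w) = arc_dot E w w"
  by (induction n) (simp_all add: arc_dot_walk)

lemma arc_dot_self_eq_0_iff:
  assumes "\<And>a. a \<notin> arcs E \<Longrightarrow> w a = 0"
  shows "arc_dot E w w = 0 \<longleftrightarrow> w = (\<lambda>_. 0)"
  using assms by (auto simp: arc_dot_def sum_nonneg_eq_0_iff fun_eq_iff)

lemma arc_dot_dstar_re_unitv: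
  assumes "simple_graph E"
  shows "arc_dot E (dstar_re E (unitv x)) (dstar_re E (unitv x)) = (if deg E x = 0 then 0 else 1)"
  by (simp add: arc_dot_dstar_re dmul_re_dstar_re[OF assms] vdot_unitv_left cong: if_cong)
    (simp add: unitv_def)

text \<open>Equality in Bessel's inequality for the projection \<open>d\<^sup>* d\<close> forces \<open>w\<close> into its range.\<close>

lemma dstar_re_dmul_re_if_norm_eq:
  assumes sg: "simple_graph E" and outside: "\<And>a. a \<notin> arcs E \<Longrightarrow> w a = 0"
    and norm: "arc_dot E w w = vdot (dmul_re E w) (dmul_re E w)"
  shows "dstar_re E (dmul_re E w) = w"
proof -
  define q where "q = dstar_re E (dmul_re E w)"
  have qw: "arc_dot E q w = vdot (dmul_re E w) (dmul_re E w)" by (simp add: q_def arc_dot_dstar_re)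
  have qq: "arc_dot E q q = vdot (dmul_re E w) (dmul_re E w)"
    using dmul_re_dstar_re_eq[OF sg dmul_re_isolated[OF sg]] by (simp add: q_def arc_dot_dstar_re)
  have "arc_dot E (\<lambda>a. w a - q a) (\<lambda>a. w a - q a) = arc_dot E w w - 2 * arc_dot E q w + arc_dot E q q"
  proof -
    have "(w a - q a) * (w a - q a) = w a * w a - 2 * (q a * w a) + q a * q a" for a
      by (simp add: algebra_simps)
    then show ?thesis by (simp add: arc_dot_def sum.distrib sum_subtractf sum_distrib_left)
  qed
  also have "\<dots> = 0" by (simp add: norm qw qq)
  finally have "(\<lambda>a. w a - q a) = (\<lambda>_. 0)"
    by (subst (asm) arc_dot_self_eq_0_iff) (simp_all add: outside q_def dstar_re_outside_arcs)
  then show ?thesis by (simp add: q_def fun_eq_iff)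
qed

section \<open>Perfect state transfer\<close>

lemma dstar_re_unitv_eq_0_iff:
  assumes "simple_graph E"
  shows "dstar_re E (unitv x) = (\<lambda>_. 0) \<longleftrightarrow> deg E x = 0"
  using arc_dot_self_eq_0_iff[of E "dstar_re E (unitv x)"] arc_dot_dstar_re_unitv[OF assms, of x]
  by (auto simp: dstar_re_outside_arcs split: if_splits)

lemma walk_iter_dstar_re_eq_0_iff:
  assumes "simple_graph E"
  shows "(walk E ^^ n) (dstar_re E g) = (\<lambda>_. 0) \<longleftrightarrow> dstar_re E g = (\<lambda>_. 0)"
  using arc_dot_self_eq_0_iff[of E "(walk E ^^ n) (dstar_re E g)"]
    arc_dot_self_eq_0_iff[of E "dstar_re E g"] arc_dot_walk_iter[OF assms, of n "dstar_re E g"]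
  by (simp add: walk_iter_dstar_re_outside_arcs dstar_re_outside_arcs)

lemma PST_of_real_iff:
  assumes "simple_graph E" and "\<Psi> \<noteq> (\<lambda>_. 0)"
  shows "PST E (\<lambda>a. of_real (\<Phi> a)) (\<lambda>a. of_real (\<Psi> a)) \<tau> \<longleftrightarrow>
    \<Phi> \<noteq> \<Psi> \<and> (\<exists>\<gamma>\<in>{1, -1}. (walk E ^^ \<tau>) \<Phi> = (\<lambda>a. \<gamma> * \<Psi> a))"
proof -
  let ?\<phi> = "(walk E ^^ \<tau>) \<Phi>"
  have "(\<exists>\<gamma>::complex. cmod \<gamma> = 1 \<and> (\<lambda>a. of_real (?\<phi> a)) = (\<lambda>a. \<gamma> * of_real (\<Psi> a))) \<longleftrightarrow>
      (\<exists>\<gamma>\<in>{1, -1}. ?\<phi> = (\<lambda>a. \<gamma> * \<Psi> a))"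
  proof
    assume "\<exists>\<gamma>::complex. cmod \<gamma> = 1 \<and> (\<lambda>a. of_real (?\<phi> a)) = (\<lambda>a. \<gamma> * of_real (\<Psi> a))"
    then obtain \<gamma> :: complex where \<gamma>: "cmod \<gamma> = 1" and eq: "\<And>a. of_real (?\<phi> a) = \<gamma> * of_real (\<Psi> a)"
      by (auto simp: fun_eq_iff)
    obtain b where b: "\<Psi> b \<noteq> 0" using assms(2) by (auto simp: fun_eq_iff simp del: split_paired_All)
    define g where "g = ?\<phi> b / \<Psi> b"
    \<comment> \<open>\<open>\<gamma>\<close> is real because both states are.\<close>
    have \<gamma>g: "\<gamma> = of_real g" using eq[of b] b by (simp add: g_def field_simps)
    have "?\<phi> a = g * \<Psi> a" for a using eq[of a] by (simp add: \<gamma>g flip: of_real_mult)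
    then have "?\<phi> = (\<lambda>a. g * \<Psi> a)" by (simp add: fun_eq_iff)
    moreover have "g \<in> {1, -1}" using \<gamma> \<gamma>g by (auto simp: abs_if split: if_splits)
    ultimately show "\<exists>\<gamma>\<in>{1, -1}. ?\<phi> = (\<lambda>a. \<gamma> * \<Psi> a)" by blast
  next
    assume "\<exists>\<gamma>\<in>{1, -1}. ?\<phi> = (\<lambda>a. \<gamma> * \<Psi> a)"
    then obtain \<gamma> :: real where "\<gamma> \<in> {1, -1}" "?\<phi> = (\<lambda>a. \<gamma> * \<Psi> a)" by blast
    then show "\<exists>\<gamma>::complex. cmod \<gamma> = 1 \<and> (\<lambda>a. of_real (?\<phi> a)) = (\<lambda>a. \<gamma> * of_real (\<Psi> a))"
      by (intro exI[of _ "of_real \<gamma>"]) auto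
  qed
  moreover have "(\<lambda>a. complex_of_real (\<Phi> a)) \<noteq> (\<lambda>a. of_real (\<Psi> a)) \<longleftrightarrow> \<Phi> \<noteq> \<Psi>"
    by (simp add: fun_eq_iff)
  ultimately show ?thesis by (simp add: PST_def evol_iter_of_real[OF assms(1)])
qed

lemma walk_transfer_iff_cheb_transfer:
  assumes sg: "simple_graph E" and "deg E x \<noteq> 0" "deg E y \<noteq> 0" and \<gamma>: "\<gamma> \<in> {1, -1}"
  shows "(walk E ^^ n) (dstar_re E (unitv x)) = (\<lambda>a. \<gamma> * dstar_re E (unitv y) a) \<longleftrightarrow>
    mat_vec (cheb_mat n (discr E)) (unitv x) = (\<lambda>u. \<gamma> * unitv y u)"
proof -
  let ?w = "(walk E ^^ n) (dstar_re E (unitv x))"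
  have ex: "\<And>u. deg E u = 0 \<Longrightarrow> unitv x u = 0" and ey: "\<And>u. deg E u = 0 \<Longrightarrow> unitv y u = 0"
    using assms(2,3) by (auto simp: unitv_def)
  have dmul_w: "dmul_re E ?w = mat_vec (cheb_mat n (discr E)) (unitv x)"
    by (rule dmul_re_walk_iter_dstar_re[OF sg ex])
  have dmul_y: "dmul_re E (\<lambda>a. \<gamma> * dstar_re E (unitv y) a) = (\<lambda>u. \<gamma> * unitv y u)"
    by (simp add: fun_eq_iff dmul_re_scale dmul_re_dstar_re_eq[OF sg ey])
  show ?thesis
  proof
    assume "?w = (\<lambda>a. \<gamma> * dstar_re E (unitv y) a)"
    then show "mat_vec (cheb_mat n (discr E)) (unitv x) = (\<lambda>u. \<gamma> * unitv y u)"
      using dmul_w dmul_y by simp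
  next
    assume cheb: "mat_vec (cheb_mat n (discr E)) (unitv x) = (\<lambda>u. \<gamma> * unitv y u)"
    have "arc_dot E ?w ?w = 1"
      using assms(2) by (simp add: arc_dot_walk_iter[OF sg] arc_dot_dstar_re_unitv[OF sg])
    also have "\<dots> = vdot (dmul_re E ?w) (dmul_re E ?w)"
      using \<gamma> by (auto simp: dmul_w cheb vdot_scale_left vdot_scale_right vdot_unitv_left unitv_self)
    finally have "dstar_re E (dmul_re E ?w) = ?w"
      by (intro dstar_re_dmul_re_if_norm_eq[OF sg walk_iter_dstar_re_outside_arcs])
    then show "?w = (\<lambda>a. \<gamma> * dstar_re E (unitv y) a)"
      by (simp add: dmul_w cheb dstar_re_scale)
  qed
qed

lemma cheb_transfer_imp_deg_ne_0:
  assumes sg: "simple_graph E" and "x \<noteq> y" and "\<gamma> \<noteq> 0"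
    and cheb: "mat_vec (cheb_mat n (discr E)) (unitv x) = (\<lambda>u. \<gamma> * unitv y u)"
  shows "deg E x \<noteq> 0 \<and> deg E y \<noteq> 0"
proof -
  have at_y: "mat_vec (cheb_mat n (discr E)) (unitv x) y \<noteq> 0"
    using assms(3) by (simp add: cheb unitv_self)
  have "deg E x \<noteq> 0"
  proof
    assume "deg E x = 0"
    then have "mat_vec (discr E) (unitv x) = (\<lambda>u. 0 * unitv x u)"
      by (simp add: fun_eq_iff mat_vec_unitv discr_eq[OF sg] deg_eq_0_iff simple_graph_sym[OF sg, of _ x])
    then have "mat_vec (cheb_mat n (discr E)) (unitv x) y = cheb n 0 * unitv x y"
      using mat_vec_cheb_mat_eigenvector by metis
    with at_y assms(2) show False by (simp add: unitv_def)
  qed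
  moreover have "deg E y \<noteq> 0"
  proof
    assume "deg E y = 0"
    moreover have "\<And>u. deg E u = 0 \<Longrightarrow> unitv x u = 0" using \<open>deg E x \<noteq> 0\<close> by (auto simp: unitv_def)
    ultimately show False
      using at_y dmul_re_walk_iter_dstar_re[OF sg] dmul_re_isolated[OF sg] by metis
  qed
  ultimately show ?thesis ..
qed

lemma dstar_unitv: "dstar E (unitv z) = (\<lambda>a. of_real (dstar_re E (unitv z) a))"
proof -
  have "(unitv z :: 'a \<Rightarrow> complex) = (\<lambda>u. of_real (unitv z u))" by (simp add: unitv_def fun_eq_iff)
  then show ?thesis by (simp add: dstar_of_real)
qed

lemma not_PST_if_isolated:
  assumes sg: "simple_graph E" and "deg E x = 0 \<or> deg E y = 0"
  shows "\<not> PST E (dstar E (unitv x)) (dstar E (unitv y)) \<tau>"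
proof
  let ?\<Phi> = "dstar_re E (unitv x)" and ?\<Psi> = "dstar_re E (unitv y)"
  assume "PST E (dstar E (unitv x)) (dstar E (unitv y)) \<tau>"
  then have "(\<lambda>a. complex_of_real (?\<Phi> a)) \<noteq> (\<lambda>a. of_real (?\<Psi> a))" and "\<exists>\<gamma>::complex. cmod \<gamma> = 1 \<and>
      (\<lambda>a. of_real ((walk E ^^ \<tau>) ?\<Phi> a)) = (\<lambda>a. \<gamma> * of_real (?\<Psi> a))"
    unfolding PST_def dstar_unitv evol_iter_of_real[OF sg] by blast+
  then have ne: "?\<Phi> \<noteq> ?\<Psi>" by metis
  obtain \<gamma> :: complex where "cmod \<gamma> = 1"
    and eq: "(\<lambda>a. of_real ((walk E ^^ \<tau>) ?\<Phi> a)) = (\<lambda>a. \<gamma> * of_real (?\<Psi> a))"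
    using \<open>\<exists>\<gamma>::complex. _\<close> by blast
  then have "\<gamma> \<noteq> 0" by auto
  then have "(walk E ^^ \<tau>) ?\<Phi> a = 0 \<longleftrightarrow> ?\<Psi> a = 0" for a
    using fun_cong[OF eq, of a] by auto
  then have "(walk E ^^ \<tau>) ?\<Phi> = (\<lambda>_. 0) \<longleftrightarrow> ?\<Psi> = (\<lambda>_. 0)" by (simp add: fun_eq_iff)
  \<comment> \<open>Since the walk preserves norms, \<open>\<Phi>\<close> and \<open>\<Psi>\<close> vanish together, and one of them does.\<close>
  then have "?\<Phi> = (\<lambda>_. 0) \<and> ?\<Psi> = (\<lambda>_. 0)"
    using assms(2) by (auto simp: walk_iter_dstar_re_eq_0_iff[OF sg] dstar_re_unitv_eq_0_iff[OF sg])
  with ne show False by simp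
qed

lemma PST_iff_cheb_transfer:
  assumes sg: "simple_graph E" and "x \<noteq> y"
  shows "PST E (dstar E (unitv x)) (dstar E (unitv y)) \<tau> \<longleftrightarrow>
    (\<exists>\<gamma>\<in>{1, -1}. mat_vec (cheb_mat \<tau> (discr E)) (unitv x) = (\<lambda>u. \<gamma> * unitv y u))"
proof (cases "deg E x = 0 \<or> deg E y = 0")
  case True
  have "\<not> mat_vec (cheb_mat \<tau> (discr E)) (unitv x) = (\<lambda>u. \<gamma> * unitv y u)"
    if "\<gamma> \<in> {1, -1}" for \<gamma> :: real
    using cheb_transfer_imp_deg_ne_0[OF sg assms(2), of \<gamma> \<tau>] True that by auto
  then show ?thesis using not_PST_if_isolated[OF sg True] by blast
next
  case False
  let ?\<Phi> = "dstar_re E (unitv x)" and ?\<Psi> = "dstar_re E (unitv y)"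
  from False have deg: "deg E x \<noteq> 0" "deg E y \<noteq> 0" by simp_all
  then obtain p where "E x p" by (auto simp: deg_eq_0_iff)
  then have "?\<Phi> (p, x) \<noteq> ?\<Psi> (p, x)"
    using assms(2) deg(1) simple_graph_sym[OF sg, of x p] by (simp add: dstar_re_arc unitv_def)
  moreover have "?\<Psi> \<noteq> (\<lambda>_. 0)" using deg(2) by (simp add: dstar_re_unitv_eq_0_iff[OF sg])
  ultimately have "PST E (dstar E (unitv x)) (dstar E (unitv y)) \<tau> \<longleftrightarrow>
      (\<exists>\<gamma>\<in>{1, -1}. (walk E ^^ \<tau>) ?\<Phi> = (\<lambda>a. \<gamma> * ?\<Psi> a))"
    unfolding dstar_unitv by (subst PST_of_real_iff[OF sg]) auto
  also have "\<dots> \<longleftrightarrow> (\<exists>\<gamma>\<in>{1, -1}. mat_vec (cheb_mat \<tau> (discr E)) (unitv x) = (\<lambda>u. \<gamma> * unitv y u))"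
    by (rule bex_cong[OF refl walk_transfer_iff_cheb_transfer[OF sg deg]])
  finally show ?thesis .
qed

section \<open>The spectrum of the discriminant and regular graphs\<close>

lemma abs_arc_dot_shift_re_le:
  assumes "simple_graph E"
  shows "\<bar>arc_dot E w (shift_re E w)\<bar> \<le> arc_dot E w w"
proof -
  have "\<bar>arc_dot E w (shift_re E w)\<bar> \<le> (\<Sum>a\<in>arcs E. \<bar>w a * shift_re E w a\<bar>)"
    unfolding arc_dot_def by (rule sum_abs)
  also have "\<dots> \<le> (\<Sum>a\<in>arcs E. (w a * w a + shift_re E w a * shift_re E w a) / 2)"
  proof (rule sum_mono)
    fix a
    have "0 \<le> (\<bar>w a\<bar> - \<bar>shift_re E w a\<bar>)\<^sup>2" by simp
    then show "\<bar>w a * shift_re E w a\<bar> \<le> (w a * w a + shift_re E w a * shift_re E w a) / 2"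
      by (simp add: abs_mult power2_eq_square algebra_simps)
  qed
  also have "\<dots> = (arc_dot E w w + arc_dot E (shift_re E w) (shift_re E w)) / 2"
    unfolding arc_dot_def sum.distrib[symmetric] sum_divide_distrib ..
  also have "\<dots> = arc_dot E w w" by (simp add: arc_dot_shift_re[OF assms])
  finally show ?thesis .
qed

lemma discr_spectrum_bound:
  assumes sg: "simple_graph E" and "\<mu> \<in> spectrum (discr E)"
  shows "\<bar>\<mu>\<bar> \<le> 1"
proof -
  obtain v where "v \<noteq> (\<lambda>_. 0)" and v: "v \<in> eigenspace (discr E) \<mu>"
    using assms(2) by (auto simp: spectrum_def)
  then have pos: "0 < vdot v v" using vdot_self_nonneg[of v] by (simp add: vdot_self_eq_0_iff order_le_less)
  \<comment> \<open>\<open>\<langle>v, P v\<rangle> = \<langle>d\<^sup>* v, R d\<^sup>* v\<rangle>\<close>, \<open>R\<close> is an isometry and \<open>\<parallel>d\<^sup>* v\<parallel> \<le> \<parallel>v\<parallel>\<close>.\<close>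
  have "mat_vec (discr E) v = (\<lambda>u. \<mu> * v u)" using v by (simp add: eigenspace_iff fun_eq_iff)
  then have "\<bar>\<mu>\<bar> * vdot v v = \<bar>vdot v (mat_vec (discr E) v)\<bar>"
    using pos by (simp add: vdot_scale_right abs_mult)
  also have "\<dots> = \<bar>arc_dot E (dstar_re E v) (shift_re E (dstar_re E v))\<bar>"
    by (simp add: arc_dot_dstar_re dmul_re_shift_re_dstar_re[OF sg])
  also have "\<dots> \<le> arc_dot E (dstar_re E v) (dstar_re E v)"
    by (rule abs_arc_dot_shift_re_le[OF sg])
  also have "\<dots> = (\<Sum>u\<in>UNIV. v u * (if deg E u = 0 then 0 else v u))"
    by (simp add: arc_dot_dstar_re vdot_def dmul_re_dstar_re[OF sg])
  also have "\<dots> \<le> vdot v v"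
    unfolding vdot_def by (rule sum_mono) simp
  finally show ?thesis using pos by simp
qed

lemma sum_mat_vec_column_stochastic:
  assumes "\<And>w. (\<Sum>u\<in>UNIV. M u w) = 1"
  shows "(\<Sum>u\<in>UNIV. mat_vec M f u) = (\<Sum>u\<in>UNIV. f u)"
proof -
  have "(\<Sum>u\<in>UNIV. mat_vec M f u) = (\<Sum>w\<in>UNIV. (\<Sum>u\<in>UNIV. M u w) * f w)"
    unfolding mat_vec_def sum_distrib_right by (rule sum.swap)
  then show ?thesis by (simp add: assms)
qed

lemma sum_mat_vec_cheb_mat_column_stochastic:
  assumes "\<And>w. (\<Sum>u\<in>UNIV. M u w) = 1"
  shows "(\<Sum>u\<in>UNIV. mat_vec (cheb_mat n M) f u) = (\<Sum>u\<in>UNIV. f u)"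
proof (induction n rule: induct_nat_012)
  case (ge2 n)
  then show ?case
    by (simp only: mat_vec_cheb_mat_Suc_Suc sum_subtractf sum_distrib_left[symmetric]
        sum_mat_vec_column_stochastic[OF assms])
qed (simp_all add: mat_vec_id_mat sum_mat_vec_column_stochastic[OF assms])

lemma regular_discr_column_sum:
  assumes sg: "simple_graph E" and "\<And>u. deg E u = k" and "k \<noteq> 0"
  shows "(\<Sum>u\<in>UNIV. discr E u w) = 1"
proof -
  have "(\<Sum>u\<in>UNIV. discr E u w) = (\<Sum>u\<in>UNIV. if E w u then 1 / real k else 0)"
    using assms(2) by (intro sum.cong refl) (simp add: discr_eq[OF sg] simple_graph_sym[OF sg, of _ w])
  also have "\<dots> = 1" using assms(2,3) by (simp add: sum_adjacent_const)
  finally show ?thesis .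
qed

lemma regular_cheb_transfer_imp_eq_1:
  assumes sg: "simple_graph E" and "regular E" and "x \<noteq> y" and "\<gamma> \<noteq> 0"
    and cheb: "mat_vec (cheb_mat n (discr E)) (unitv x) = (\<lambda>u. \<gamma> * unitv y u)"
  shows "\<gamma> = 1"
proof -
  obtain k where k: "\<And>u. deg E u = k" using assms(2) by (auto simp: regular_def)
  have "k \<noteq> 0" using cheb_transfer_imp_deg_ne_0[OF sg assms(3,4) cheb] k by simp
  then have "(\<Sum>u\<in>UNIV. mat_vec (cheb_mat n (discr E)) (unitv x) u) = (\<Sum>u\<in>UNIV. unitv x u)"
    by (intro sum_mat_vec_cheb_mat_column_stochastic regular_discr_column_sum[OF sg k])
  then show ?thesis
    using sum_unitv_mult[of x "\<lambda>_. 1"] sum_unitv_mult[of y "\<lambda>_. 1"]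
    by (simp add: cheb sum_distrib_left[symmetric])
qed

theorem theorem6p5:
  fixes E :: "'a::finite \<Rightarrow> 'a \<Rightarrow> bool" and x y :: 'a and \<tau> :: nat
  assumes "simple_graph E" and "x \<noteq> y" and "\<tau> \<ge> 1"
  shows "(PST E (dstar E (unitv x)) (dstar E (unitv y)) \<tau> \<longleftrightarrow>
            (\<exists>\<gamma>\<in>{1, -1}. condB E x y \<tau> \<gamma>))
       \<and> (PST E (dstar E (unitv x)) (dstar E (unitv y)) \<tau> \<longleftrightarrow>
            (\<exists>\<gamma>\<in>{1, -1}. condC E x y \<tau> \<gamma>))
       \<and> (regular E \<longrightarrow>
            (\<forall>\<gamma>\<in>{1, -1}. condB E x y \<tau> \<gamma> \<longrightarrow> \<gamma> = 1) \<and>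
            (\<forall>\<gamma>\<in>{1, -1}. condC E x y \<tau> \<gamma> \<longrightarrow> \<gamma> = 1))"
proof -
  have BC: "condB E x y \<tau> \<gamma> \<longleftrightarrow> condC E x y \<tau> \<gamma>" if "\<gamma> \<in> {1, -1}" for \<gamma>
    unfolding condB_def condC_iff_spectral_cond
    using that assms(3) symm_discr[OF assms(1)] discr_spectrum_bound[OF assms(1)]
    by (intro cheb_transfer_iff_spectral_cond) auto
  have PB: "PST E (dstar E (unitv x)) (dstar E (unitv y)) \<tau> \<longleftrightarrow> (\<exists>\<gamma>\<in>{1, -1}. condB E x y \<tau> \<gamma>)"
    unfolding condB_def by (rule PST_iff_cheb_transfer[OF assms(1,2)])
  have "\<gamma> = 1" if "regular E" "\<gamma> \<in> {1, -1}" "condB E x y \<tau> \<gamma>" for \<gamma>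
    using that regular_cheb_transfer_imp_eq_1[OF assms(1) that(1) assms(2), of \<gamma> \<tau>]
    by (auto simp: condB_def)
  with PB BC show ?thesis by auto
qed

end
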